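(* Let $F=L-N:X\to Y$ be of class $C^1$ and satisfy hypothesis (H). Let $u_0=u(z_0,t_0)\in X$, with $z_0\in H_Y$, $t_0\in\mathbb{R}$. Then $u_0$ is a critical point of $F$ (i.e. $DF(u_0):X\to Y$ is not invertible) if and only if $t_0$ is a critical point of the function $t\mapsto h(u(z_0,t))$, equivalently of $t\mapsto h^a(z_0,t)$.
   Context: Let $X,Y$ be real Hilbert spaces, $X$ densely included in $Y$, and let $L:X\subset Y\to Y$ be a self-adjoint operator, $X$ carrying the graph norm. Let $\lambda_p$ be a simple isolated eigenvalue of $L$ with eigenvector $\phi_p\in X$, $\|\phi_p\|_Y=1$. Let $V_X=V_Y=\langle\phi_p\rangle$ be its real span, $H_Y=\{y\in Y:\langle y,\phi_p\rangle_Y=0\}$, $H_X=X\cap H_Y$, and $P:Y\to H_Y$ the orthogonal projection. Let $N:Y\to Y$, $F=L-N:X\to Y$, and for $t\in\mathbb{R}$ let $PN_t:H_Y\to H_Y$, $PN_t(w)=PN(w+t\phi_p)$, and $PF_t:H_X\to H_Y$, $PF_t(w)=PF(w+t\phi_p)$. Hypothesis (H): there is $n\ge0$ such that every $PN_t$ is Lipschitz with constant $n$ independent of $t$, and $[-n,n]\cap\sigma(L)=\{\lambda_p\}$. Under (H) each $PF_t$ is a homeomorphism (a $C^1$ diffeomorphism if $F$ is $C^1$); for $z\in H_Y$, $t\in\mathbb{R}$ let $w(z,t)=(PF_t)^{-1}(z)$ and $u(z,t)=w(z,t)+t\phi_p$, so that $\{u(z,t):t\in\mathbb{R}\}=F^{-1}(z+V_Y)$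 is the fiber associated to $z$. The height function is $h:X\to\mathbb{R}$, $h(u)=\langle F(u),\phi_p\rangle_Y$, and the adapted height function is $h^a(z,t)=h(u(z,t))$, so that $F(u(z,t))=z+h^a(z,t)\phi_p$. *)

theory Defs
  imports "HOL-Analysis.Analysis"
begin

text \<open>X is a real Hilbert space (type 'x)
  carrying the graph norm of L, densely and injectively included in Y by the linear map
  incl. The (unbounded) operator L : X \<subseteq> Y \<rightarrow> Y is modelled by its restriction
  L :: 'x \<Rightarrow> 'y to its domain X.\<close>

definition graph_norm_setting :: "('x::real_inner \<Rightarrow> 'y::real_inner) \<Rightarrow> ('x \<Rightarrow> 'y) \<Rightarrow> bool" where
  "graph_norm_setting incl L \<longleftrightarrow>
     linear incl \<and> inj incl \<and> closure (range incl) = UNIV \<and> linear L \<and>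
     (\<forall>a b. inner a b = inner (incl a) (incl b) + inner (L a) (L b))"

text \<open>Self-adjointness: the adjoint L* (graph {(y,v). \<forall>a\<in>X. <L a, y> = <a, v>})
  coincides with L (graph {(incl b, L b)}).\<close>
definition self_adjoint_op :: "('x::real_inner \<Rightarrow> 'y::real_inner) \<Rightarrow> ('x \<Rightarrow> 'y) \<Rightarrow> bool" where
  "self_adjoint_op incl L \<longleftrightarrow>
     (\<forall>y v. (\<forall>a. inner (L a) y = inner (incl a) v) \<longleftrightarrow> (\<exists>b. y = incl b \<and> v = L b))"

text \<open>Spectrum of L: lam is in the resolvent set iff L - lam I : X \<rightarrow> Y is bijective
  with inverse bounded as an operator on Y.\<close>
definition op_spectrum :: "('x::real_inner \<Rightarrow> 'y::real_inner) \<Rightarrow> ('x \<Rightarrow> 'y) \<Rightarrow> real set" where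
  "op_spectrum incl L = {lam. \<not> (\<exists>R :: 'y \<Rightarrow> 'x.
      bounded_linear (\<lambda>y. incl (R y)) \<and>
      (\<forall>y. L (R y) - lam *\<^sub>R incl (R y) = y) \<and>
      (\<forall>a. R (L a - lam *\<^sub>R incl a) = a))}"

definition simple_isolated_eigenvalue ::
  "('x::real_inner \<Rightarrow> 'y::real_inner) \<Rightarrow> ('x \<Rightarrow> 'y) \<Rightarrow> real \<Rightarrow> 'x \<Rightarrow> bool" where
  "simple_isolated_eigenvalue incl L lam phi \<longleftrightarrow>
     L phi = lam *\<^sub>R incl phi \<and> norm (incl phi) = 1 \<and>
     (\<forall>a. L a = lam *\<^sub>R incl a \<longrightarrow> (\<exists>c. a = c *\<^sub>R phi)) \<and>
     (\<exists>e>0. \<forall>mu\<in>op_spectrum incl L. \<bar>mu - lam\<bar> < e \<longrightarrow> mu = lam)"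

definition HY :: "'y::real_inner \<Rightarrow> 'y set" where
  "HY phiY = {y. inner y phiY = 0}"

definition HX :: "('x \<Rightarrow> 'y::real_inner) \<Rightarrow> 'x \<Rightarrow> 'x set" where
  "HX incl phi = {a. inner (incl a) (incl phi) = 0}"

definition projP :: "'y::real_inner \<Rightarrow> 'y \<Rightarrow> 'y" where
  "projP phiY y = y - inner y phiY *\<^sub>R phiY"

definition Fop :: "('x \<Rightarrow> 'y) \<Rightarrow> ('x \<Rightarrow> 'y::real_vector) \<Rightarrow> ('y \<Rightarrow> 'y) \<Rightarrow> 'x \<Rightarrow> 'y" where
  "Fop incl L N a = L a - N (incl a)"

definition hypH :: "('x::real_inner \<Rightarrow> 'y::real_inner) \<Rightarrow> ('x \<Rightarrow> 'y) \<Rightarrow> ('y \<Rightarrow> 'y) \<Rightarrow> real \<Rightarrow> 'x \<Rightarrow> bool" where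
  "hypH incl L N lam phi \<longleftrightarrow>
     (\<exists>n\<ge>0. (\<forall>t::real. n-lipschitz_on (HY (incl phi))
                 (\<lambda>w. projP (incl phi) (N (w + t *\<^sub>R incl phi)))) \<and>
            {-n..n} \<inter> op_spectrum incl L = {lam})"

definition fiber_w :: "('x::real_vector \<Rightarrow> 'y::real_inner) \<Rightarrow> ('x \<Rightarrow> 'y) \<Rightarrow> ('y \<Rightarrow> 'y) \<Rightarrow> 'x \<Rightarrow> 'y \<Rightarrow> real \<Rightarrow> 'x" where
  "fiber_w incl L N phi z t =
     (THE w. w \<in> HX incl phi \<and> projP (incl phi) (Fop incl L N (w + t *\<^sub>R phi)) = z)"

definition fiber_u :: "('x::real_vector \<Rightarrow> 'y::real_inner) \<Rightarrow> ('x \<Rightarrow> 'y) \<Rightarrow> ('y \<Rightarrow> 'y) \<Rightarrow> 'x \<Rightarrow> 'y \<Rightarrow> real \<Rightarrow> 'x" where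
  "fiber_u incl L N phi z t = fiber_w incl L N phi z t + t *\<^sub>R phi"

definition height :: "('x \<Rightarrow> 'y::real_inner) \<Rightarrow> ('x \<Rightarrow> 'y) \<Rightarrow> ('y \<Rightarrow> 'y) \<Rightarrow> 'x \<Rightarrow> 'x \<Rightarrow> real" where
  "height incl L N phi a = inner (Fop incl L N a) (incl phi)"

definition adapted_height :: "('x::real_vector \<Rightarrow> 'y::real_inner) \<Rightarrow> ('x \<Rightarrow> 'y) \<Rightarrow> ('y \<Rightarrow> 'y) \<Rightarrow> 'x \<Rightarrow> 'y \<Rightarrow> real \<Rightarrow> real" where
  "adapted_height incl L N phi z t = height incl L N phi (fiber_u incl L N phi z t)"

definition invertible_op :: "('x::real_normed_vector \<Rightarrow>\<^sub>L 'y::real_normed_vector) \<Rightarrow> bool" where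
  "invertible_op T \<longleftrightarrow> (\<exists>S :: 'y \<Rightarrow>\<^sub>L 'x. (\<forall>a. S (T a) = a) \<and> (\<forall>y. T (S y) = y))"

end

theory Submission
  imports Defs
begin

text \<open>Write \<open>u = w + t phi\<close> with \<open>w \<in> H\<^sub>X\<close>. Since \<open>P N\<close> is \<open>n\<close>-Lipschitz and the part of \<open>L\<close> in
  \<open>H\<^sub>X\<close> has no spectrum in \<open>[-n, n]\<close>, the projected equation \<open>P F (w + t phi) = z\<close> becomes a
  contraction after composing with a resolvent \<open>(L - \<mu>)\<^sup>-\<^sup>1\<close> for a suitable \<open>\<mu>\<close> near \<open>0\<close>; the same
  holds for its linearization \<open>P DF(u) v = y\<close>. Hence \<open>DF(u)\<close> is invertible on \<open>H\<^sub>X\<close> modulo \<open>phi\<close>,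
  the fiber \<open>t \<mapsto> u(z,t)\<close> is differentiable with tangent \<open>phi - (P DF(u))\<^sup>-\<^sup>1 P DF(u) phi\<close>, and
  \<open>DF(u)\<close> is invertible exactly when it does not map this tangent into \<open>H\<^sub>Y\<close>, i.e. when the
  derivative of the height \<open>\<langle>F(u(z,t)), phi\<rangle>\<close> is nonzero. The required spectral gap for the part
  of \<open>L\<close> in \<open>H\<^sub>X\<close> comes from self-adjointness: the approximate eigenvalues of a self-adjoint
  operator control its inverse, and the simple isolated eigenvalue \<open>lam\<close> is not an approximate
  eigenvalue of the part in \<open>H\<^sub>X\<close>.\<close>

section \<open>Approximate eigenvalues of self-adjoint operators\<close>

definition approx_eigenvalue :: "('a::real_normed_vector \<Rightarrow> 'a) \<Rightarrow> 'a set \<Rightarrow> real \<Rightarrow> bool" where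
  "approx_eigenvalue T H \<nu> \<longleftrightarrow> (\<forall>\<epsilon>>0. \<exists>y\<in>H. norm y = 1 \<and> norm (T y - \<nu> *\<^sub>R y) < \<epsilon>)"

lemma approx_eigenvalue_disjI:
  assumes "\<And>\<epsilon>. \<epsilon> > 0 \<Longrightarrow> (\<exists>y\<in>H. norm y = 1 \<and> norm (T y - a *\<^sub>R y) < \<epsilon>) \<or>
                             (\<exists>y\<in>H. norm y = 1 \<and> norm (T y - b *\<^sub>R y) < \<epsilon>)"
  shows "approx_eigenvalue T H a \<or> approx_eigenvalue T H b"
proof (rule ccontr)
  assume "\<not> ?thesis"
  then obtain \<epsilon>1 \<epsilon>2 where "\<epsilon>1 > 0" "\<epsilon>2 > 0"
    "\<forall>y\<in>H. norm y = 1 \<longrightarrow> \<epsilon>1 \<le> norm (T y - a *\<^sub>R y)"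
    "\<forall>y\<in>H. norm y = 1 \<longrightarrow> \<epsilon>2 \<le> norm (T y - b *\<^sub>R y)"
    unfolding approx_eigenvalue_def by (auto simp: not_less)
  then show False using assms[of "min \<epsilon>1 \<epsilon>2"] by force
qed

lemma approx_eigenvalue_shift:
  "approx_eigenvalue (\<lambda>y. T y - \<gamma> *\<^sub>R y) H \<nu> \<Longrightarrow> approx_eigenvalue T H (\<gamma> + \<nu>)"
  unfolding approx_eigenvalue_def by (simp add: algebra_simps)

lemma not_approx_eigenvalue_if_bounded_below:
  assumes "C > 0" and bound: "\<And>y. y \<in> H \<Longrightarrow> norm y \<le> C * norm (T y - \<nu> *\<^sub>R y)"
  shows "\<not> approx_eigenvalue T H \<nu>"
proof
  assume "approx_eigenvalue T H \<nu>"
  then obtain y where y: "y \<in> H" "norm y = 1" "norm (T y - \<nu> *\<^sub>R y) < 1 / C"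
    using \<open>C > 0\<close> unfolding approx_eigenvalue_def by (meson zero_less_divide_1_iff)
  have "1 \<le> C * norm (T y - \<nu> *\<^sub>R y)" using bound[OF y(1)] y(2) by simp
  also have "\<dots> < 1" using y(3) \<open>C > 0\<close> by (simp add: pos_less_divide_eq mult.commute)
  finally show False by simp
qed

lemma subspace_has_unit_vector: "subspace H \<Longrightarrow> y \<in> H \<Longrightarrow> y \<noteq> 0 \<Longrightarrow> \<exists>u\<in>H. norm u = 1"
  by (intro bexI[of _ "(1 / norm y) *\<^sub>R y"]) (simp_all add: subspace_scale)

lemma power2_norm_diff:
  fixes a b :: "'a::real_inner"
  shows "(norm (a - b))\<^sup>2 = (norm a)\<^sup>2 - 2 * inner a b + (norm b)\<^sup>2"
  unfolding power2_norm_eq_inner by (simp add: inner_diff_left inner_diff_right inner_commute)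

lemma approx_eigenvalue_of_square:
  fixes T :: "'a::real_normed_vector \<Rightarrow> 'a"
  assumes T: "linear T" and H: "subspace H" "\<And>y. y \<in> H \<Longrightarrow> T y \<in> H"
    and sq: "approx_eigenvalue (\<lambda>y. T (T y)) H (M\<^sup>2)"
  shows "approx_eigenvalue T H M \<or> approx_eigenvalue T H (-M)"
proof (rule approx_eigenvalue_disjI)
  interpret T: linear T by fact
  fix \<epsilon> :: real assume \<epsilon>: "\<epsilon> > 0"
  then obtain y where y: "y \<in> H" "norm y = 1" "norm (T (T y) - M\<^sup>2 *\<^sub>R y) < \<epsilon>\<^sup>2"
    using sq unfolding approx_eigenvalue_def by (meson zero_less_power)
  define z where "z = T y + M *\<^sub>R y"
  have zH: "z \<in> H" unfolding z_def using H y(1) by (simp add: subspace_add subspace_scale)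
  have factor: "T z - M *\<^sub>R z = T (T y) - M\<^sup>2 *\<^sub>R y"
    unfolding z_def by (simp add: T.add T.scale algebra_simps power2_eq_square)
  show "(\<exists>y\<in>H. norm y = 1 \<and> norm (T y - M *\<^sub>R y) < \<epsilon>) \<or>
        (\<exists>y\<in>H. norm y = 1 \<and> norm (T y - (-M) *\<^sub>R y) < \<epsilon>)"
  proof (cases "norm z < \<epsilon>")
    case True
    then show ?thesis using y by (auto simp: z_def)
  next
    case False
    define u where "u = (1 / norm z) *\<^sub>R z"
    have u: "u \<in> H" "norm u = 1" unfolding u_def using zH H False \<epsilon> by (auto simp: subspace_scale)
    have "T u - M *\<^sub>R u = (1 / norm z) *\<^sub>R (T z - M *\<^sub>R z)"
      unfolding u_def by (simp add: T.scale scaleR_diff_right)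
    then have "norm (T u - M *\<^sub>R u) = norm (T (T y) - M\<^sup>2 *\<^sub>R y) / norm z"
      by (simp add: factor)
    also have "\<dots> < \<epsilon>\<^sup>2 / \<epsilon>"
      using y(3) False \<epsilon> by (intro frac_less) auto
    also have "\<dots> = \<epsilon>" by (simp add: power2_eq_square)
    finally show ?thesis using u by blast
  qed
qed

lemma self_adjoint_square_defect:
  fixes T :: "'a::real_inner \<Rightarrow> 'a"
  assumes sa: "\<And>y z. inner (T y) z = inner y (T z)"
    and TT: "norm (T (T y)) \<le> M * norm (T y)" and y: "norm y = 1" and "M \<ge> 0"
  shows "(norm (T (T y) - M\<^sup>2 *\<^sub>R y))\<^sup>2 \<le> M\<^sup>2 * (M\<^sup>2 - (norm (T y))\<^sup>2)"
proof -
  have "inner (T (T y)) y = (norm (T y))\<^sup>2" by (simp add: sa power2_norm_eq_inner)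
  then have "(norm (T (T y) - M\<^sup>2 *\<^sub>R y))\<^sup>2 = (norm (T (T y)))\<^sup>2 - 2 * M\<^sup>2 * (norm (T y))\<^sup>2 + (M\<^sup>2)\<^sup>2"
    using y unfolding power2_norm_diff by simp
  also have "\<dots> \<le> M\<^sup>2 * (norm (T y))\<^sup>2 - 2 * M\<^sup>2 * (norm (T y))\<^sup>2 + (M\<^sup>2)\<^sup>2"
    using TT \<open>M \<ge> 0\<close> by (simp add: power_mono flip: power_mult_distrib)
  finally show ?thesis by (simp add: algebra_simps power2_eq_square)
qed

lemma self_adjoint_square_approx_eigenvalue:
  fixes T :: "'a::real_inner \<Rightarrow> 'a"
  assumes sa: "\<And>y z. inner (T y) z = inner y (T z)" and "M \<ge> 0"
    and H: "\<And>y. y \<in> H \<Longrightarrow> T y \<in> H" and bound: "\<And>y. y \<in> H \<Longrightarrow> norm (T y) \<le> M * norm y"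
    and attained: "\<And>\<eta>. \<eta> > 0 \<Longrightarrow> \<exists>y\<in>H. norm y = 1 \<and> M - \<eta> < norm (T y)"
  shows "approx_eigenvalue (\<lambda>y. T (T y)) H (M\<^sup>2)"
  unfolding approx_eigenvalue_def
proof (intro allI impI)
  fix \<epsilon> :: real assume \<epsilon>: "\<epsilon> > 0"
  show "\<exists>y\<in>H. norm y = 1 \<and> norm (T (T y) - M\<^sup>2 *\<^sub>R y) < \<epsilon>"
  proof (cases "M = 0")
    case True
    then show ?thesis using attained[OF \<epsilon>] bound H \<epsilon> by fastforce
  next
    case False
    then have "M > 0" using \<open>M \<ge> 0\<close> by simp
    then obtain y where y: "y \<in> H" "norm y = 1" "M - \<epsilon>\<^sup>2 / (2 * M ^ 3) < norm (T y)"
      using attained[of "\<epsilon>\<^sup>2 / (2 * M ^ 3)"] \<epsilon> by auto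
    have "(norm (T (T y) - M\<^sup>2 *\<^sub>R y))\<^sup>2 \<le> M\<^sup>2 * ((M - norm (T y)) * (M + norm (T y)))"
      using self_adjoint_square_defect[OF sa bound[OF H[OF y(1)]] y(2) \<open>M \<ge> 0\<close>]
      by (simp add: power2_eq_square algebra_simps)
    also have "\<dots> < M\<^sup>2 * ((\<epsilon>\<^sup>2 / (2 * M ^ 3)) * (2 * M))"
      using y bound[OF y(1)] \<open>M > 0\<close>
      by (intro mult_strict_left_mono mult_less_le_imp_less) (auto intro: add_pos_nonneg)
    also have "\<dots> = \<epsilon>\<^sup>2" using \<open>M > 0\<close> by (simp add: power2_eq_square power3_eq_cube)
    finally show ?thesis using y \<epsilon> by (meson power2_less_imp_less less_imp_le)
  qed
qed

lemma self_adjoint_norm_approx_eigenvalue: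
  fixes T :: "'a::real_inner \<Rightarrow> 'a"
  assumes bl: "bounded_linear T" and sa: "\<And>y z. inner (T y) z = inner y (T z)"
    and H: "subspace H" "\<And>y. y \<in> H \<Longrightarrow> T y \<in> H" and unit: "\<exists>y\<in>H. norm y = 1"
  obtains M where "M \<ge> 0" "\<And>y. y \<in> H \<Longrightarrow> norm (T y) \<le> M * norm y"
    "approx_eigenvalue T H M \<or> approx_eigenvalue T H (-M)"
proof -
  interpret T: bounded_linear T by fact
  define U where "U = {y \<in> H. norm y = 1}"
  define M where "M = (SUP y\<in>U. norm (T y))"
  obtain K where K: "\<And>y. norm (T y) \<le> norm y * K" using T.bounded by blast
  have bdd: "bdd_above ((\<lambda>y. norm (T y)) ` U)"
    using K unfolding U_def by (intro bdd_aboveI[of _ K]) (auto, metis mult_1)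
  have U: "U \<noteq> {}" using unit unfolding U_def by blast
  have up: "norm (T y) \<le> M" if "y \<in> U" for y
    unfolding M_def using bdd that by (rule cSUP_upper2) simp
  have M0: "M \<ge> 0" using U up by (meson all_not_in_conv norm_ge_zero order.trans)
  have bound: "norm (T y) \<le> M * norm y" if "y \<in> H" for y
  proof (cases "y = 0")
    case False
    then have "(1 / norm y) *\<^sub>R y \<in> U" unfolding U_def using H that by (simp add: subspace_scale)
    then have "norm (T y) / norm y \<le> M" using up by (fastforce simp: T.scaleR divide_inverse_commute)
    then show ?thesis using False by (simp add: divide_le_eq mult.commute)
  qed simp
  have "\<exists>y\<in>H. norm y = 1 \<and> M - \<eta> < norm (T y)" if "\<eta> > 0" for \<eta>
    using less_cSUP_iff[OF U bdd, of "M - \<eta>"] that unfolding M_def U_def by auto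
  from self_adjoint_square_approx_eigenvalue[OF sa M0 H(2) bound this]
  show ?thesis using that M0 bound approx_eigenvalue_of_square[OF T.linear_axioms H] by blast
qed

lemma approx_eigenvalue_right_inverse:
  fixes Q :: "'y::real_normed_vector \<Rightarrow> 'x::real_vector" and B J :: "'x \<Rightarrow> 'y"
  assumes B: "linear B" and J: "linear J" and BQ: "\<And>y. B (Q y) = y"
    and QG: "\<And>y. y \<in> H \<Longrightarrow> Q y \<in> G" and G: "\<And>c a. a \<in> G \<Longrightarrow> c *\<^sub>R a \<in> G"
    and ap: "approx_eigenvalue (\<lambda>y. J (Q y)) H \<nu>" and \<nu>: "\<nu> \<noteq> 0" and \<epsilon>: "\<epsilon> > 0"
  shows "\<exists>a\<in>G. norm (J a) = 1 \<and> norm (B a - (1 / \<nu>) *\<^sub>R J a) < \<epsilon>"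
proof -
  interpret B: linear B by fact
  interpret J: linear J by fact
  define \<eta> where "\<eta> = min (\<bar>\<nu>\<bar> / 2) (\<epsilon> * \<nu>\<^sup>2 / 2)"
  have "\<eta> > 0" unfolding \<eta>_def using \<nu> \<epsilon> by simp
  then obtain y where y: "y \<in> H" "norm y = 1" "norm (J (Q y) - \<nu> *\<^sub>R y) < \<eta>"
    using ap unfolding approx_eigenvalue_def by blast
  define k where "k = norm (J (Q y))"
  have "norm (\<nu> *\<^sub>R y) \<le> norm (J (Q y)) + norm (J (Q y) - \<nu> *\<^sub>R y)"
    by (metis norm_minus_commute norm_triangle_sub add.commute)
  then have k: "k > \<bar>\<nu>\<bar> / 2" using y(2,3) unfolding k_def \<eta>_def by simp
  then have "k > 0" using abs_ge_zero[of \<nu>] by linarith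
  define a where "a = (1 / k) *\<^sub>R Q y"
  have "a \<in> G" unfolding a_def using QG[OF y(1)] G by simp
  moreover have "norm (J a) = 1" using \<open>k > 0\<close> unfolding a_def k_def by (simp add: J.scale)
  moreover have "B a - (1 / \<nu>) *\<^sub>R J a = (- 1 / (k * \<nu>)) *\<^sub>R (J (Q y) - \<nu> *\<^sub>R y)"
    unfolding a_def using \<nu> k by (simp add: B.scale J.scale BQ algebra_simps)
  then have "norm (B a - (1 / \<nu>) *\<^sub>R J a) = norm (J (Q y) - \<nu> *\<^sub>R y) / (k * \<bar>\<nu>\<bar>)"
    using k by (simp add: abs_mult)
  moreover have "\<dots> < \<epsilon>"
  proof -
    have "norm (J (Q y) - \<nu> *\<^sub>R y) < \<epsilon> * \<nu>\<^sup>2 / 2" using y(3) unfolding \<eta>_def by simp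
    also have "\<dots> = \<epsilon> * ((\<bar>\<nu>\<bar> / 2) * \<bar>\<nu>\<bar>)" by (simp add: power2_eq_square)
    also have "\<dots> \<le> \<epsilon> * (k * \<bar>\<nu>\<bar>)" using k \<epsilon> by (intro mult_left_mono mult_right_mono) auto
    finally show ?thesis using k \<nu> by (simp add: divide_less_eq mult.commute)
  qed
  ultimately show ?thesis by auto
qed

lemma approx_eigenvalue_inverse:
  fixes E Q :: "'a::real_normed_vector \<Rightarrow> 'a"
  assumes "linear E" "\<And>y. E (Q y) = y" "subspace H" "\<And>y. y \<in> H \<Longrightarrow> Q y \<in> H"
    and "approx_eigenvalue Q H \<nu>" "\<nu> \<noteq> 0"
  shows "approx_eigenvalue E H (1 / \<nu>)"
  unfolding approx_eigenvalue_def
  using approx_eigenvalue_right_inverse[where J = id, OF assms(1) linear_id assms(2,4)] assms(3,5,6)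
  by (simp add: subspace_scale)

lemma self_adjoint_inverse_bounded_below:
  fixes E Q :: "'a::real_inner \<Rightarrow> 'a"
  assumes E: "linear E" "\<And>y. y \<in> H \<Longrightarrow> E y \<in> H"
    and Q: "bounded_linear Q" "\<And>y z. inner (Q y) z = inner y (Q z)" "\<And>y. y \<in> H \<Longrightarrow> Q y \<in> H"
    and inv: "\<And>y. Q (E y) = y" "\<And>y. E (Q y) = y"
    and H: "subspace H" "\<exists>y\<in>H. norm y = 1"
    and gap: "\<And>\<nu>. approx_eigenvalue E H \<nu> \<Longrightarrow> \<gamma> \<le> \<bar>\<nu>\<bar>"
    and v: "v \<in> H"
  shows "\<gamma> * norm v \<le> norm (E v)"
proof -
  obtain M where M: "M \<ge> 0" "\<And>y. y \<in> H \<Longrightarrow> norm (Q y) \<le> M * norm y"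
    "approx_eigenvalue Q H M \<or> approx_eigenvalue Q H (-M)"
    using self_adjoint_norm_approx_eigenvalue[OF Q(1,2) H(1) Q(3) H(2)] by blast
  have "M > 0"
  proof (rule ccontr)
    assume "\<not> M > 0"
    then have "Q y = 0" if "y \<in> H" for y using M(1) M(2)[OF that] by simp
    then show False using H(2) inv(2) linear_0[OF E(1)] by (metis norm_zero zero_neq_one)
  qed
  then have "\<gamma> \<le> 1 / M"
    using M(3) gap approx_eigenvalue_inverse[OF E(1) inv(2) H(1) Q(3)] by fastforce
  have "norm v \<le> M * norm (E v)" using M(2)[OF E(2)[OF v]] inv(1) by simp
  have "\<gamma> * norm v \<le> norm v / M" using mult_right_mono[OF \<open>\<gamma> \<le> 1 / M\<close> norm_ge_zero[of v]] by simp
  also have "\<dots> \<le> norm (E v)"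
    using \<open>norm v \<le> M * norm (E v)\<close> \<open>M > 0\<close> by (simp add: pos_divide_le_eq mult.commute)
  finally show ?thesis .
qed

section \<open>Self-adjoint operators bounded below on their range\<close>

lemma convergent_if_summable_norm_diff:
  fixes x :: "nat \<Rightarrow> 'a::{real_normed_vector,complete_space}"
  assumes "summable (\<lambda>j. norm (x (Suc j) - x j))"
  shows "convergent x"
proof -
  have bound: "norm (x n - x m) \<le> (\<Sum>j=m..<n. norm (x (Suc j) - x j))" if "m \<le> n" for m n
    using norm_sum[of "\<lambda>j. x (Suc j) - x j" "{m..<n}"] sum_Suc_diff'[OF that, of x] by simp
  have "Cauchy x"
  proof (rule CauchyI)
    fix e :: real assume "e > 0"
    then obtain N where N: "\<forall>m\<ge>N. \<forall>n. norm (\<Sum>j=m..<n. norm (x (Suc j) - x j)) < e"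
      using assms unfolding summable_Cauchy by blast
    have "norm (x m - x n) < e" if "m \<ge> N" "n \<ge> N" for m n
    proof (cases "m \<le> n")
      case True
      have "(\<Sum>j=m..<n. norm (x (Suc j) - x j)) < e" using N that(1) by (auto simp: abs_less_iff)
      then show ?thesis using bound[OF True] by (simp add: norm_minus_commute)
    next
      case False
      have "(\<Sum>j=n..<m. norm (x (Suc j) - x j)) < e" using N that(2) by (auto simp: abs_less_iff)
      then show ?thesis using bound[of n m] False by simp
    qed
    then show "\<exists>M. \<forall>m\<ge>M. \<forall>n\<ge>M. norm (x m - x n) < e" by blast
  qed
  then show ?thesis by (simp add: Cauchy_convergent_iff)
qed

lemma self_adjoint_range_contraction:
  fixes D :: "'a::real_inner \<Rightarrow> 'a"
  assumes sa: "\<And>y z. inner (D y) z = inner y (D z)" and "K > 0"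
    and DD: "norm (D (D w)) \<le> K * norm (D w)" and c: "c * (norm w)\<^sup>2 \<le> (norm (D w))\<^sup>2"
  shows "(norm (w - (1 / K\<^sup>2) *\<^sub>R D (D w)))\<^sup>2 \<le> (1 - c / K\<^sup>2) * (norm w)\<^sup>2"
proof -
  have "inner w (D (D w)) = (norm (D w))\<^sup>2" by (simp add: sa power2_norm_eq_inner inner_commute)
  then have "(norm (w - (1 / K\<^sup>2) *\<^sub>R D (D w)))\<^sup>2
      = (norm w)\<^sup>2 - 2 / K\<^sup>2 * (norm (D w))\<^sup>2 + (1 / K\<^sup>2)\<^sup>2 * (norm (D (D w)))\<^sup>2"
    unfolding power2_norm_diff by (simp add: power_mult_distrib power_divide)
  also have "\<dots> \<le> (norm w)\<^sup>2 - 2 / K\<^sup>2 * (norm (D w))\<^sup>2 + (1 / K\<^sup>2)\<^sup>2 * (K * norm (D w))\<^sup>2"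
    using DD by (intro add_left_mono mult_left_mono power_mono) auto
  also have "\<dots> = (norm w)\<^sup>2 - (norm (D w))\<^sup>2 / K\<^sup>2"
    using \<open>K > 0\<close> by (simp add: field_simps power2_eq_square)
  also have "\<dots> \<le> (1 - c / K\<^sup>2) * (norm w)\<^sup>2"
    using c \<open>K > 0\<close> by (simp add: field_simps)
  finally show ?thesis .
qed

context
  fixes D :: "'a::{real_inner,complete_space} \<Rightarrow> 'a" and H :: "'a set" and c K :: real
  assumes D: "bounded_linear D" "\<And>y z. inner (D y) z = inner y (D z)"
    and H: "closed H" "subspace H" "\<And>y. y \<in> H \<Longrightarrow> D y \<in> H"
    and range: "\<And>v. v \<in> H \<Longrightarrow> c * (norm (D v))\<^sup>2 \<le> (norm (D (D v)))\<^sup>2"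
    and K: "K > 0" "c \<le> K\<^sup>2" "\<And>x. norm (D x) \<le> K * norm x" and "c > 0"
begin

text \<open>The iterates of \<open>damped\<close> converge to the orthogonal projection onto the kernel of \<open>D\<close>.\<close>
definition damped :: "'a \<Rightarrow> 'a" where "damped x = x - (1 / K\<^sup>2) *\<^sub>R D (D x)"

interpretation D: bounded_linear D by (rule D(1))

lemma iterate_damped_D: "(damped ^^ j) (D x) = D ((damped ^^ j) x)"
  by (induction j) (simp_all add: damped_def D.diff D.scaleR)

lemma iterate_damped_H: "x \<in> H \<Longrightarrow> (damped ^^ j) x \<in> H"
  by (induction j) (simp_all add: damped_def H subspace_diff subspace_scale)

lemma norm_iterate_damped_range:
  assumes v: "v \<in> H" shows "norm ((damped ^^ j) (D v)) \<le> sqrt (1 - c / K\<^sup>2) ^ j * norm (D v)"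
proof (induction j)
  case (Suc j)
  define \<theta> where "\<theta> = sqrt (1 - c / K\<^sup>2)"
  define w where "w = D ((damped ^^ j) v)"
  have "\<theta> \<ge> 0" "\<theta>\<^sup>2 = 1 - c / K\<^sup>2" unfolding \<theta>_def using K(1,2) by simp_all
  then have "(norm (damped w))\<^sup>2 \<le> (\<theta> * norm w)\<^sup>2"
    using self_adjoint_range_contraction[OF D(2) K(1) K(3) range[OF iterate_damped_H[OF v]]]
    unfolding w_def damped_def by (simp add: power_mult_distrib)
  then have "norm (damped w) \<le> \<theta> * norm w" by (rule power2_le_imp_le) (simp add: \<open>\<theta> \<ge> 0\<close>)
  also have "\<dots> \<le> \<theta> * (\<theta> ^ j * norm (D v))"
    using Suc \<open>\<theta> \<ge> 0\<close> unfolding w_def \<theta>_def iterate_damped_D[symmetric] by (intro mult_left_mono)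
  finally have "norm ((damped ^^ Suc j) (D v)) \<le> \<theta> * (\<theta> ^ j * norm (D v))"
    unfolding w_def by (simp add: iterate_damped_D)
  then show ?case unfolding \<theta>_def by (simp only: power_Suc mult.assoc)
qed simp

lemma iterate_damped_tendsto_0:
  assumes ker: "\<And>z. z \<in> H \<Longrightarrow> D z = 0 \<Longrightarrow> z = 0" and y: "y \<in> H"
  shows "(\<lambda>j. (damped ^^ j) y) \<longlonglongrightarrow> 0"
proof -
  define \<theta> where "\<theta> = sqrt (1 - c / K\<^sup>2)"
  have \<theta>: "0 \<le> \<theta>" "\<theta> < 1" unfolding \<theta>_def using K(1,2) \<open>c > 0\<close> by simp_all
  define x where "x j = (damped ^^ j) y" for j
  have step: "norm (x (Suc j) - x j) \<le> norm (D (D y)) / K\<^sup>2 * \<theta> ^ j" for j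
  proof -
    have "x (Suc j) - x j = - ((1 / K\<^sup>2) *\<^sub>R (damped ^^ j) (D (D y)))"
      by (simp add: x_def damped_def iterate_damped_D)
    then have "norm (x (Suc j) - x j) = norm ((damped ^^ j) (D (D y))) / K\<^sup>2" by simp
    also have "\<dots> \<le> (\<theta> ^ j * norm (D (D y))) / K\<^sup>2"
      using norm_iterate_damped_range[OF H(3)[OF y], of j] unfolding \<theta>_def by (rule divide_right_mono) simp
    finally show ?thesis by (simp add: mult.commute)
  qed
  have "summable (\<lambda>j. norm (x (Suc j) - x j))"
  proof (rule summable_comparison_test[OF exI[of _ 0]])
    show "\<forall>j\<ge>0. norm (norm (x (Suc j) - x j)) \<le> norm (D (D y)) / K\<^sup>2 * \<theta> ^ j" using step by simp
    show "summable (\<lambda>j. norm (D (D y)) / K\<^sup>2 * \<theta> ^ j)" using \<theta> by (simp add: summable_geometric)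
  qed
  then obtain z where xz: "x \<longlonglongrightarrow> z"
    using convergent_if_summable_norm_diff unfolding convergent_def by blast
  have "(\<lambda>j. D (x j)) \<longlonglongrightarrow> 0"
  proof (rule Lim_null_comparison)
    show "\<forall>\<^sub>F j in sequentially. norm (D (x j)) \<le> \<theta> ^ j * norm (D y)"
      using norm_iterate_damped_range[OF y] unfolding x_def \<theta>_def iterate_damped_D by simp
    show "(\<lambda>j. \<theta> ^ j * norm (D y)) \<longlonglongrightarrow> 0"
      using \<theta> by (intro tendsto_mult_left_zero LIMSEQ_power_zero) simp
  qed
  then have "D z = 0" using LIMSEQ_unique[OF D.tendsto[OF xz]] by blast
  moreover have "z \<in> H" unfolding x_def using closed_sequentially[OF H(1) _ xz] iterate_damped_H[OF y]
    by (simp add: x_def)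
  ultimately show ?thesis using ker xz unfolding x_def by blast
qed

lemma iterate_damped_telescope:
  "y - (damped ^^ N) y = D (\<Sum>j<N. (1 / K\<^sup>2) *\<^sub>R D ((damped ^^ j) y))"
proof -
  have "y - (damped ^^ N) y = (\<Sum>j<N. (damped ^^ j) y - (damped ^^ Suc j) y)"
    using sum_lessThan_telescope'[of "\<lambda>j. (damped ^^ j) y" N] by (simp only: funpow_0)
  also have "\<dots> = (\<Sum>j<N. D ((1 / K\<^sup>2) *\<^sub>R D ((damped ^^ j) y)))" by (simp add: damped_def D.scaleR)
  finally show ?thesis by (simp only: D.sum)
qed

end

text \<open>The range of \<open>D\<close> is dense in \<open>H\<close>, so the bound on the range extends to all of \<open>H\<close>.\<close>
lemma self_adjoint_bounded_below_of_range:
  fixes D :: "'a::{real_inner,complete_space} \<Rightarrow> 'a"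
  assumes D: "bounded_linear D" "\<And>y z. inner (D y) z = inner y (D z)"
    and H: "closed H" "subspace H" "\<And>y. y \<in> H \<Longrightarrow> D y \<in> H"
    and ker: "\<And>z. z \<in> H \<Longrightarrow> D z = 0 \<Longrightarrow> z = 0"
    and "c > 0" and range: "\<And>v. v \<in> H \<Longrightarrow> c * (norm (D v))\<^sup>2 \<le> (norm (D (D v)))\<^sup>2"
    and y: "y \<in> H"
  shows "c * (norm y)\<^sup>2 \<le> (norm (D y))\<^sup>2"
proof -
  interpret D: bounded_linear D by fact
  obtain K0 where K0: "\<And>x. norm (D x) \<le> norm x * K0" "K0 > 0" using D.pos_bounded by blast
  define K where "K = max K0 (sqrt c)"
  have K: "K > 0" "c \<le> K\<^sup>2" "\<And>x. norm (D x) \<le> K * norm x"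
  proof -
    show "K > 0" unfolding K_def using K0(2) by (simp add: less_max_iff_disj)
    show "c \<le> K\<^sup>2" unfolding K_def by (rule sqrt_le_D) simp
    have "norm x * K0 \<le> norm x * K" for x unfolding K_def by (simp add: mult_left_mono)
    then show "norm (D x) \<le> K * norm x" for x by (metis K0(1) order.trans mult.commute)
  qed
  note damped = D H range K \<open>c > 0\<close>
  define x where "x N = (damped D K ^^ N) y" for N
  have "x \<longlonglongrightarrow> 0" unfolding x_def using iterate_damped_tendsto_0[OF damped ker y] .
  then have lim: "(\<lambda>N. y - x N) \<longlonglongrightarrow> y" using tendsto_diff[OF tendsto_const] by fastforce
  have approx: "c * (norm (y - x N))\<^sup>2 \<le> (norm (D (y - x N)))\<^sup>2" for N
  proof -
    have "y - x N = D (\<Sum>j<N. (1 / K\<^sup>2) *\<^sub>R D (x j))"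
      unfolding x_def by (rule iterate_damped_telescope[OF damped])
    moreover have "(\<Sum>j<N. (1 / K\<^sup>2) *\<^sub>R D (x j)) \<in> H"
      unfolding x_def using H y by (intro subspace_sum subspace_scale H(3) iterate_damped_H[OF damped]) auto
    ultimately show ?thesis using range by presburger
  qed
  have "(\<lambda>N. c * (norm (y - x N))\<^sup>2) \<longlonglongrightarrow> c * (norm y)\<^sup>2" using lim by (intro tendsto_intros)
  moreover have "(\<lambda>N. (norm (D (y - x N)))\<^sup>2) \<longlonglongrightarrow> (norm (D y))\<^sup>2"
    using D.tendsto[OF lim] by (intro tendsto_intros)
  ultimately show ?thesis using approx by (intro LIMSEQ_le) auto
qed

section \<open>Derivatives and remainder estimates\<close>

lemma has_derivative_norm_le_lipschitz:
  fixes G :: "real \<Rightarrow> 'a::real_normed_vector"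
  assumes G: "(G has_derivative (\<lambda>h. h *\<^sub>R V)) (at 0)" and lip: "\<And>h. norm (G h - G 0) \<le> C * \<bar>h\<bar>"
  shows "norm V \<le> C"
proof (rule field_le_epsilon)
  fix \<epsilon> :: real assume "\<epsilon> > 0"
  then obtain d where "d > 0" and d: "\<And>h. norm h < d \<Longrightarrow> norm (G h - G 0 - h *\<^sub>R V) \<le> \<epsilon> * norm h"
    using G unfolding has_derivative_at_alt by fastforce
  define h where "h = d / 2"
  have h: "h > 0" "norm h < d" unfolding h_def using \<open>d > 0\<close> by auto
  have "h * norm V \<le> norm (G h - G 0) + norm (G h - G 0 - h *\<^sub>R V)"
    using norm_triangle_ineq4[of "G h - G 0" "G h - G 0 - h *\<^sub>R V"] h by simp
  also have "\<dots> \<le> h * (C + \<epsilon>)" using lip[of h] d[OF h(2)] h by (simp add: algebra_simps)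
  finally show "norm V \<le> C + \<epsilon>" using h by simp
qed

lemma small_o_absorb:
  fixes E :: "real \<Rightarrow> 'a::real_normed_vector" and r :: "real \<Rightarrow> 'b::real_normed_vector"
  assumes E: "\<And>t. norm (E t) \<le> C * norm (r t)" and "C \<ge> 0" and "B \<ge> 0"
    and r: "\<And>\<epsilon>. \<epsilon> > 0 \<Longrightarrow> \<exists>d>0. \<forall>t. \<bar>t - t0\<bar> < d \<longrightarrow> norm (r t) \<le> \<epsilon> * (norm (E t) + B * \<bar>t - t0\<bar>)"
    and "\<epsilon> > 0"
  shows "\<exists>d>0. \<forall>t. \<bar>t - t0\<bar> < d \<longrightarrow> norm (E t) \<le> \<epsilon> * \<bar>t - t0\<bar>"
proof -
  define m where "m = min 1 \<epsilon>"
  have m: "m > 0" "C * m \<le> C" "C * B * m \<le> C * B * \<epsilon>"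
    unfolding m_def using \<open>C \<ge> 0\<close> \<open>B \<ge> 0\<close> \<open>\<epsilon> > 0\<close> by (simp_all add: mult_left_le mult_left_mono)
  define \<epsilon>1 where "\<epsilon>1 = m / (2 * C * (B + 1) + 1)"
  have "C * B \<ge> 0" "C * \<epsilon> \<ge> 0" using \<open>C \<ge> 0\<close> \<open>B \<ge> 0\<close> \<open>\<epsilon> > 0\<close> by simp_all
  then have den: "2 * C * (B + 1) + 1 > 0" using \<open>C \<ge> 0\<close> by (simp add: algebra_simps)
  then have "\<epsilon>1 > 0" unfolding \<epsilon>1_def using m by simp
  have C\<epsilon>1: "C * \<epsilon>1 \<le> 1 / 2" "2 * C * \<epsilon>1 * B \<le> \<epsilon>"
    unfolding \<epsilon>1_def using den m \<open>C * B \<ge> 0\<close> \<open>C * \<epsilon> \<ge> 0\<close> \<open>\<epsilon> > 0\<close>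
    by (simp_all add: field_simps)
  obtain d where "d > 0" and d: "\<And>t. \<bar>t - t0\<bar> < d \<Longrightarrow> norm (r t) \<le> \<epsilon>1 * (norm (E t) + B * \<bar>t - t0\<bar>)"
    using r[OF \<open>\<epsilon>1 > 0\<close>] by blast
  have "norm (E t) \<le> \<epsilon> * \<bar>t - t0\<bar>" if "\<bar>t - t0\<bar> < d" for t
  proof -
    have "norm (E t) \<le> C * (\<epsilon>1 * (norm (E t) + B * \<bar>t - t0\<bar>))"
      using E[of t] d[OF that] \<open>C \<ge> 0\<close> by (meson mult_left_mono order.trans)
    then have "norm (E t) \<le> 2 * C * \<epsilon>1 * B * \<bar>t - t0\<bar>"
      using C\<epsilon>1(1) mult_right_mono[OF C\<epsilon>1(1) norm_ge_zero[of "E t"]] by (simp add: algebra_simps)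
    also have "\<dots> \<le> \<epsilon> * \<bar>t - t0\<bar>" using C\<epsilon>1(2) by (intro mult_right_mono) auto
    finally show ?thesis .
  qed
  then show ?thesis using \<open>d > 0\<close> by blast
qed

lemma has_derivative_remainder_along:
  fixes F :: "'a::real_normed_vector \<Rightarrow> 'b::real_normed_vector" and u :: "real \<Rightarrow> 'a"
  assumes F: "(F has_derivative A) (at a)" and u: "(u \<longlongrightarrow> a) (at t0)" "u t0 = a" and "\<epsilon> > 0"
  shows "\<exists>d>0. \<forall>t. \<bar>t - t0\<bar> < d \<longrightarrow> norm (F (u t) - F a - A (u t - a)) \<le> \<epsilon> * norm (u t - a)"
proof -
  obtain d1 where "d1 > 0" and d1: "\<And>b. norm (b - a) < d1 \<Longrightarrow> norm (F b - F a - A (b - a)) \<le> \<epsilon> * norm (b - a)"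
    using F \<open>\<epsilon> > 0\<close> unfolding has_derivative_at_alt by blast
  obtain d2 where "d2 > 0" and d2: "\<And>t. t \<noteq> t0 \<Longrightarrow> dist t t0 < d2 \<Longrightarrow> dist (u t) a < d1"
    using u(1) \<open>d1 > 0\<close> unfolding tendsto_iff eventually_at by blast
  have "norm (u t - a) < d1" if "\<bar>t - t0\<bar> < d2" for t
    using d2[of t] that \<open>d1 > 0\<close> u(2) by (cases "t = t0") (auto simp: dist_norm)
  then show ?thesis using d1 \<open>d2 > 0\<close> by blast
qed

section \<open>Resolvents of a symmetric operator on its graph space\<close>

locale self_adjoint_graph =
  fixes incl :: "'x::{real_inner,complete_space} \<Rightarrow> 'y::{real_inner,complete_space}"
    and L :: "'x \<Rightarrow> 'y"
  assumes linear_incl: "linear incl" and linear_L: "linear L"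
    and graph_inner: "\<And>a b. inner a b = inner (incl a) (incl b) + inner (L a) (L b)"
    and symmetric: "\<And>a b. inner (L a) (incl b) = inner (incl a) (L b)"
begin

interpretation incl: linear incl by (rule linear_incl)
interpretation L: linear L by (rule linear_L)

lemma power2_norm_graph: "(norm a)\<^sup>2 = (norm (incl a))\<^sup>2 + (norm (L a))\<^sup>2"
  using graph_inner[of a a] by (simp add: power2_norm_eq_inner)

lemma norm_L_le: "norm (L a) \<le> norm a"
  and norm_le_norm_incl_add_norm_L: "norm a \<le> norm (incl a) + norm (L a)"
  using power2_norm_graph[of a]
  by (auto intro: power2_le_imp_le simp: power2_sum)

lemma bounded_linear_L: "bounded_linear L"
  by (rule bounded_linear_intro[of _ 1]) (auto simp: L.add L.scale norm_L_le)

definition resolvent :: "real \<Rightarrow> ('y \<Rightarrow> 'x) \<Rightarrow> bool" where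
  "resolvent \<mu> R \<longleftrightarrow> bounded_linear (\<lambda>y. incl (R y)) \<and>
      (\<forall>y. L (R y) - \<mu> *\<^sub>R incl (R y) = y) \<and> (\<forall>a. R (L a - \<mu> *\<^sub>R incl a) = a)"

lemma not_in_spectrum_iff: "\<mu> \<notin> op_spectrum incl L \<longleftrightarrow> (\<exists>R. resolvent \<mu> R)"
  unfolding op_spectrum_def resolvent_def by simp

context
  fixes \<mu> R assumes R: "resolvent \<mu> R"
begin

lemma resolvent_right_inverse: "L (R y) - \<mu> *\<^sub>R incl (R y) = y"
  and resolvent_left_inverse: "R (L a - \<mu> *\<^sub>R incl a) = a"
  and bounded_linear_incl_resolvent: "bounded_linear (\<lambda>y. incl (R y))"
  using R unfolding resolvent_def by auto

lemma linear_resolvent: "linear R"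
proof
  fix y1 y2 :: 'y and c :: real
  have "L (R y1 + R y2) - \<mu> *\<^sub>R incl (R y1 + R y2)
      = (L (R y1) - \<mu> *\<^sub>R incl (R y1)) + (L (R y2) - \<mu> *\<^sub>R incl (R y2))"
    by (simp add: L.add incl.add algebra_simps)
  then have "L (R y1 + R y2) - \<mu> *\<^sub>R incl (R y1 + R y2) = y1 + y2"
    by (simp add: resolvent_right_inverse)
  then show "R (y1 + y2) = R y1 + R y2" by (metis resolvent_left_inverse)
  have "L (c *\<^sub>R R y1) - \<mu> *\<^sub>R incl (c *\<^sub>R R y1) = c *\<^sub>R (L (R y1) - \<mu> *\<^sub>R incl (R y1))"
    by (simp add: L.scale incl.scale scaleR_diff_right)
  then have "L (c *\<^sub>R R y1) - \<mu> *\<^sub>R incl (c *\<^sub>R R y1) = c *\<^sub>R y1"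
    by (simp add: resolvent_right_inverse)
  then show "R (c *\<^sub>R y1) = c *\<^sub>R R y1" by (metis resolvent_left_inverse)
qed

lemma bounded_linear_resolvent: "bounded_linear R"
proof -
  interpret T: bounded_linear "\<lambda>y. incl (R y)" by (rule bounded_linear_incl_resolvent)
  obtain K where K: "\<And>y. norm (incl (R y)) \<le> norm y * K" "K \<ge> 0" using T.nonneg_bounded by blast
  have bound: "norm (R y) \<le> norm y * (1 + (1 + \<bar>\<mu>\<bar>) * K)" for y
  proof -
    have "L (R y) = y + \<mu> *\<^sub>R incl (R y)" using resolvent_right_inverse[of y] by (simp add: algebra_simps)
    then have "norm (R y) \<le> norm (incl (R y)) + (norm y + \<bar>\<mu>\<bar> * norm (incl (R y)))"
      using norm_le_norm_incl_add_norm_L[of "R y"] norm_triangle_ineq[of y "\<mu> *\<^sub>R incl (R y)"] by simp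
    also have "\<dots> = norm y + (1 + \<bar>\<mu>\<bar>) * norm (incl (R y))" by (simp add: algebra_simps)
    also have "\<dots> \<le> norm y + (1 + \<bar>\<mu>\<bar>) * (norm y * K)"
      using K(1)[of y] by (intro add_left_mono mult_left_mono) auto
    finally show ?thesis by (simp add: algebra_simps)
  qed
  show ?thesis using linear_resolvent bound
    by (intro bounded_linear_intro[of _ "1 + (1 + \<bar>\<mu>\<bar>) * K"]) (auto simp: linear_add linear_scale)
qed

lemma resolvent_self_adjoint: "inner (incl (R y)) z = inner y (incl (R z))"
proof -
  have "inner (incl (R y)) z = inner (incl (R y)) (L (R z)) - \<mu> * inner (incl (R y)) (incl (R z))"
    by (subst resolvent_right_inverse[of z, symmetric]) (simp add: inner_diff_right)
  also have "\<dots> = inner (L (R y)) (incl (R z)) - \<mu> * inner (incl (R y)) (incl (R z))"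
    by (simp add: symmetric)
  also have "\<dots> = inner y (incl (R z))"
    by (subst (3) resolvent_right_inverse[of y, symmetric]) (simp add: inner_diff_left)
  finally show ?thesis .
qed

end

lemma resolvent_identity:
  assumes R: "resolvent \<mu> R" and R': "resolvent s R'"
  shows "incl (R' y) = incl (R y) + (s - \<mu>) *\<^sub>R incl (R (incl (R' y)))"
proof -
  interpret R: linear R by (rule linear_resolvent[OF R])
  have "L (R' y) - \<mu> *\<^sub>R incl (R' y) = y + (s - \<mu>) *\<^sub>R incl (R' y)"
    using resolvent_right_inverse[OF R', of y] by (simp add: algebra_simps)
  then have "R' y = R y + (s - \<mu>) *\<^sub>R R (incl (R' y))"
    using resolvent_left_inverse[OF R, of "R' y"] by (simp add: R.add R.scale)
  from arg_cong[OF this, of incl] show ?thesis by (simp add: incl.add incl.scale)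
qed

lemma resolvent_shift_inverse:
  assumes R: "resolvent \<mu> R" and R': "resolvent s R'" and "s \<noteq> \<mu>"
  defines "T \<equiv> \<lambda>y. incl (R y)" and "Q \<equiv> \<lambda>y. (\<mu> - s) *\<^sub>R (y + (s - \<mu>) *\<^sub>R incl (R' y))"
  shows "Q (T y - (1 / (s - \<mu>)) *\<^sub>R y) = y" "T (Q y) - (1 / (s - \<mu>)) *\<^sub>R Q y = y"
proof -
  interpret T: bounded_linear T unfolding T_def by (rule bounded_linear_incl_resolvent[OF R])
  interpret T': bounded_linear "\<lambda>y. incl (R' y)" by (rule bounded_linear_incl_resolvent[OF R'])
  have TT': "(s - \<mu>) *\<^sub>R T (incl (R' y)) = incl (R' y) - T y" for y
    using resolvent_identity[OF R R', of y] unfolding T_def by (simp add: algebra_simps)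
  have T'T: "(s - \<mu>) *\<^sub>R incl (R' (T y)) = incl (R' y) - T y" for y
    using resolvent_identity[OF R' R, of y]
    unfolding T_def by (simp add: algebra_simps)
  define d where "d = s - \<mu>"
  have "d \<noteq> 0" unfolding d_def using \<open>s \<noteq> \<mu>\<close> by simp
  have Q: "Q y = (- d) *\<^sub>R (y + d *\<^sub>R incl (R' y))" for y unfolding Q_def d_def by simp
  have "Q (T y - (1 / d) *\<^sub>R y) = (- d) *\<^sub>R (T y - (1 / d) *\<^sub>R y + d *\<^sub>R incl (R' (T y))) + d *\<^sub>R incl (R' y)"
    unfolding Q using \<open>d \<noteq> 0\<close> by (simp add: T'.diff T'.scaleR algebra_simps)
  also have "\<dots> = y" using T'T[of y] \<open>d \<noteq> 0\<close> unfolding d_def[symmetric] by (simp add: algebra_simps)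
  finally show "Q (T y - (1 / (s - \<mu>)) *\<^sub>R y) = y" unfolding d_def .
  have "T (Q y) - (1 / d) *\<^sub>R Q y = (- d) *\<^sub>R (T y + d *\<^sub>R T (incl (R' y))) + (y + d *\<^sub>R incl (R' y))"
    unfolding Q using \<open>d \<noteq> 0\<close> by (simp add: T.add T.scaleR T.neg)
  also have "\<dots> = y" using TT'[of y] unfolding d_def[symmetric] by (simp add: algebra_simps)
  finally show "T (Q y) - (1 / (s - \<mu>)) *\<^sub>R Q y = y" unfolding d_def .
qed

end

section \<open>The part of the operator orthogonal to a simple isolated eigenvector\<close>

locale isolated_simple_eigenvalue = self_adjoint_graph +
  fixes lam :: real and phi and e :: real
  assumes eigenvector: "L phi = lam *\<^sub>R incl phi" and norm_phi: "norm (incl phi) = 1"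
    and simple: "\<And>a. L a = lam *\<^sub>R incl a \<Longrightarrow> \<exists>c. a = c *\<^sub>R phi"
    and e_pos: "e > 0" and isolated: "\<And>\<mu>. \<mu> \<in> op_spectrum incl L \<Longrightarrow> \<bar>\<mu> - lam\<bar> < e \<Longrightarrow> \<mu> = lam"
begin

interpretation incl: linear incl by (rule linear_incl)
interpretation L: linear L by (rule linear_L)

abbreviation "H\<^sub>Y \<equiv> HY (incl phi)"
abbreviation "H\<^sub>X \<equiv> HX incl phi"

lemma inner_phi_phi: "inner (incl phi) (incl phi) = 1"
  using norm_phi by (simp add: power2_norm_eq_inner[symmetric])

lemma HY_iff: "y \<in> H\<^sub>Y \<longleftrightarrow> inner y (incl phi) = 0"
  and HX_iff: "a \<in> H\<^sub>X \<longleftrightarrow> incl a \<in> H\<^sub>Y"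
  unfolding HY_def HX_def by simp_all

lemma subspace_HY: "subspace H\<^sub>Y"
  unfolding subspace_def HY_def by (simp add: inner_add_left)

lemma closed_HY: "closed H\<^sub>Y"
  unfolding HY_def using closed_hyperplane[of "incl phi" 0] by (simp add: inner_commute)

lemma subspace_HX: "subspace H\<^sub>X"
  unfolding subspace_def HX_def by (simp add: incl.add incl.scale inner_add_left incl.zero)

lemma L_HX: "a \<in> H\<^sub>X \<Longrightarrow> L a \<in> H\<^sub>Y"
  unfolding HX_iff HY_iff using symmetric[of a phi] eigenvector by (simp add: inner_commute)

lemma resolvent_HY:
  assumes "resolvent \<mu> R" "\<mu> \<noteq> lam" "y \<in> H\<^sub>Y" shows "R y \<in> H\<^sub>X"
proof -
  have "0 = inner (L (R y) - \<mu> *\<^sub>R incl (R y)) (incl phi)"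
    using assms(3) by (simp add: resolvent_right_inverse[OF assms(1)] HY_iff)
  also have "\<dots> = (lam - \<mu>) * inner (incl (R y)) (incl phi)"
    using symmetric[of "R y" phi] eigenvector by (simp add: inner_diff_left algebra_simps)
  finally show ?thesis using assms(2) by (simp add: HX_iff HY_iff)
qed

lemma incl_resolvent_HY: "resolvent \<mu> R \<Longrightarrow> \<mu> \<noteq> lam \<Longrightarrow> y \<in> H\<^sub>Y \<Longrightarrow> incl (R y) \<in> H\<^sub>Y"
  using resolvent_HY HX_iff by blast

definition restricted_approx_eigenvalue :: "real \<Rightarrow> bool" where
  "restricted_approx_eigenvalue s \<longleftrightarrow>
     (\<forall>\<epsilon>>0. \<exists>a\<in>H\<^sub>X. norm (incl a) = 1 \<and> norm (L a - s *\<^sub>R incl a) < \<epsilon>)"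

lemma restricted_approx_eigenvalue_in_spectrum:
  assumes "restricted_approx_eigenvalue s" shows "s \<in> op_spectrum incl L"
proof (rule ccontr)
  assume "s \<notin> op_spectrum incl L"
  then obtain R where R: "resolvent s R" using not_in_spectrum_iff by blast
  interpret T: bounded_linear "\<lambda>y. incl (R y)" by (rule bounded_linear_incl_resolvent[OF R])
  obtain K where K: "\<And>y. norm (incl (R y)) \<le> norm y * K" "K > 0" using T.pos_bounded by blast
  obtain a where a: "norm (incl a) = 1" "norm (L a - s *\<^sub>R incl a) < 1 / K"
    using assms K(2) unfolding restricted_approx_eigenvalue_def by (meson zero_less_divide_1_iff)
  have "1 \<le> norm (L a - s *\<^sub>R incl a) * K"
    using a(1) K(1)[of "L a - s *\<^sub>R incl a"] by (simp add: resolvent_left_inverse[OF R])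
  then show False using a(2) K(2) by (simp add: pos_less_divide_eq)
qed

lemma restricted_approx_eigenvalue_of_resolvent:
  assumes R: "resolvent \<mu> R" "\<mu> \<noteq> lam"
    and ap: "approx_eigenvalue (\<lambda>y. incl (R y)) H\<^sub>Y \<nu>" and "\<nu> \<noteq> 0"
  shows "restricted_approx_eigenvalue (\<mu> + 1 / \<nu>)"
  unfolding restricted_approx_eigenvalue_def
proof (intro allI impI)
  fix \<epsilon> :: real assume "\<epsilon> > 0"
  have "linear (\<lambda>a. L a - \<mu> *\<^sub>R incl a)"
    by (rule linearI) (simp_all add: L.add L.scale incl.add incl.scale algebra_simps)
  from approx_eigenvalue_right_inverse[OF this linear_incl resolvent_right_inverse[OF R(1)]
      resolvent_HY[OF R] _ ap \<open>\<nu> \<noteq> 0\<close> \<open>\<epsilon> > 0\<close>]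
  show "\<exists>a\<in>H\<^sub>X. norm (incl a) = 1 \<and> norm (L a - (\<mu> + 1 / \<nu>) *\<^sub>R incl a) < \<epsilon>"
    using subspace_HX by (simp add: subspace_scale algebra_simps)
qed

lemma closed_restricted_approx_eigenvalues: "closed {s. restricted_approx_eigenvalue s}"
  unfolding closure_subset_eq[symmetric]
proof
  fix s assume "s \<in> closure {s. restricted_approx_eigenvalue s}"
  then have approach: "\<exists>s'. restricted_approx_eigenvalue s' \<and> \<bar>s' - s\<bar> < \<epsilon>" if "\<epsilon> > 0" for \<epsilon>
    using that unfolding closure_approachable by (metis dist_real_def mem_Collect_eq)
  show "s \<in> {s. restricted_approx_eigenvalue s}"
    unfolding mem_Collect_eq restricted_approx_eigenvalue_def
  proof (intro allI impI)
    fix \<epsilon> :: real assume "\<epsilon> > 0"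
    then obtain s' where s': "restricted_approx_eigenvalue s'" "\<bar>s' - s\<bar> < \<epsilon> / 2"
      using approach[of "\<epsilon> / 2"] by auto
    then obtain a where a: "a \<in> H\<^sub>X" "norm (incl a) = 1" "norm (L a - s' *\<^sub>R incl a) < \<epsilon> / 2"
      using \<open>\<epsilon> > 0\<close> unfolding restricted_approx_eigenvalue_def by (meson half_gt_zero)
    have "L a - s *\<^sub>R incl a = (L a - s' *\<^sub>R incl a) + (s' - s) *\<^sub>R incl a"
      by (simp add: algebra_simps)
    then have "norm (L a - s *\<^sub>R incl a) \<le> norm (L a - s' *\<^sub>R incl a) + norm ((s' - s) *\<^sub>R incl a)"
      by (metis norm_triangle_ineq)
    then have "norm (L a - s *\<^sub>R incl a) < \<epsilon>" using a(2,3) s'(2) by simp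
    then show "\<exists>a\<in>H\<^sub>X. norm (incl a) = 1 \<and> norm (L a - s *\<^sub>R incl a) < \<epsilon>"
      using a(1,2) by blast
  qed
qed

lemma resolvent_norm_restricted_approx_eigenvalue:
  assumes R: "resolvent \<mu> R" "\<mu> \<noteq> lam"
  obtains M where "M \<ge> 0" "\<And>y. y \<in> H\<^sub>Y \<Longrightarrow> norm (incl (R y)) \<le> M * norm y"
    "M > 0 \<Longrightarrow> restricted_approx_eigenvalue (\<mu> + 1 / M) \<or> restricted_approx_eigenvalue (\<mu> - 1 / M)"
proof (cases "\<exists>y\<in>H\<^sub>Y. norm y = 1")
  case True
  obtain M where M: "M \<ge> 0" "\<And>y. y \<in> H\<^sub>Y \<Longrightarrow> norm (incl (R y)) \<le> M * norm y"
      "approx_eigenvalue (\<lambda>y. incl (R y)) H\<^sub>Y M \<or> approx_eigenvalue (\<lambda>y. incl (R y)) H\<^sub>Y (-M)"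
    using self_adjoint_norm_approx_eigenvalue[OF bounded_linear_incl_resolvent[OF R(1)]
        resolvent_self_adjoint[OF R(1)] subspace_HY incl_resolvent_HY[OF R] True] by blast
  then show ?thesis
    using that restricted_approx_eigenvalue_of_resolvent[OF R, of M]
      restricted_approx_eigenvalue_of_resolvent[OF R, of "-M"] by force
next
  case False
  then have "y = 0" if "y \<in> H\<^sub>Y" for y using subspace_has_unit_vector[OF subspace_HY that] by blast
  then show ?thesis
    using that[of 0] linear_0[OF bounded_linear.linear[OF bounded_linear_incl_resolvent[OF R(1)]]] by auto
qed

context
  fixes R assumes R0: "resolvent (lam + e / 2) R"
begin

definition T :: "'b \<Rightarrow> 'b" where "T y = incl (R y)"

text \<open>\<open>c0 = 1 / (lam - (lam + e/2))\<close> is the eigenvalue of \<open>T\<close> on \<open>phi\<close>. On \<open>H\<^sub>Y\<close> the spectrum of \<open>T\<close>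
  near \<open>c0\<close> is at most \<open>c0\<close> itself, and \<open>D\<close> turns out to be bounded below there.\<close>
definition c0 :: real where "c0 = - 2 / e"

definition D :: "'b \<Rightarrow> 'b" where "D y = T y - c0 *\<^sub>R y"

lemma bounded_linear_T: "bounded_linear T"
  unfolding T_def[abs_def] by (rule bounded_linear_incl_resolvent[OF R0])

interpretation T: bounded_linear T by (rule bounded_linear_T)

lemma T_self_adjoint: "inner (T y) z = inner y (T z)"
  unfolding T_def by (rule resolvent_self_adjoint[OF R0])

lemma T_HY: "y \<in> H\<^sub>Y \<Longrightarrow> T y \<in> H\<^sub>Y"
  unfolding T_def using incl_resolvent_HY[OF R0] e_pos by simp

lemma shifted_T_inverse:
  assumes "\<nu> \<noteq> c0" "\<bar>\<nu> - c0\<bar> < 1 / e"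
  obtains Q where "bounded_linear Q" "\<And>y z. inner (Q y) z = inner y (Q z)"
    "\<And>y. y \<in> H\<^sub>Y \<Longrightarrow> Q y \<in> H\<^sub>Y" "\<And>y. Q (T y - \<nu> *\<^sub>R y) = y" "\<And>y. T (Q y) - \<nu> *\<^sub>R Q y = y"
proof -
  define s where "s = lam + e / 2 + 1 / \<nu>"
  have \<nu>: "\<nu> * e < -1" "-3 < \<nu> * e" "\<nu> * e \<noteq> -2"
    using assms e_pos unfolding c0_def by (auto simp: abs_less_iff field_simps)
  then have "\<nu> * e < 0" by linarith
  then have "\<nu> < 0" using e_pos by (simp add: mult_less_0_iff)
  have s: "s \<noteq> lam" "\<bar>s - lam\<bar> < e" "s \<noteq> lam + e / 2"
    using \<nu> \<open>\<nu> < 0\<close> e_pos unfolding s_def by (auto simp: abs_less_iff field_simps)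
  then have "s \<notin> op_spectrum incl L" using isolated by blast
  then obtain R' where R': "resolvent s R'" using not_in_spectrum_iff by blast
  have \<nu>_eq: "1 / (s - (lam + e / 2)) = \<nu>" unfolding s_def by simp
  define Q where "Q y = (lam + e / 2 - s) *\<^sub>R (y + (s - (lam + e / 2)) *\<^sub>R incl (R' y))" for y
  interpret T': bounded_linear "\<lambda>y. incl (R' y)" by (rule bounded_linear_incl_resolvent[OF R'])
  show ?thesis
  proof
    show "bounded_linear Q" unfolding Q_def[abs_def]
      by (intro bounded_linear_const_scaleR bounded_linear_add bounded_linear_ident
          T'.bounded_linear_axioms)
    show "inner (Q y) z = inner y (Q z)" for y z
      unfolding Q_def using resolvent_self_adjoint[OF R', of y z]
      by (simp add: inner_add_left inner_add_right algebra_simps)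
    show "Q y \<in> H\<^sub>Y" if "y \<in> H\<^sub>Y" for y
      unfolding Q_def using incl_resolvent_HY[OF R' s(1) that] that subspace_HY
      by (intro subspace_scale subspace_add) auto
    show "Q (T y - \<nu> *\<^sub>R y) = y" "T (Q y) - \<nu> *\<^sub>R Q y = y" for y
      using resolvent_shift_inverse[OF R0 R' s(3)] unfolding Q_def T_def \<nu>_eq by auto
  qed
qed

lemma bounded_linear_D: "bounded_linear D"
  unfolding D_def[abs_def]
  by (intro bounded_linear_sub T.bounded_linear_axioms bounded_linear_scaleR_right)

interpretation D: bounded_linear D by (rule bounded_linear_D)

lemma D_self_adjoint: "inner (D y) z = inner y (D z)"
  unfolding D_def by (simp add: inner_diff_left inner_diff_right T_self_adjoint)

lemma D_HY: "y \<in> H\<^sub>Y \<Longrightarrow> D y \<in> H\<^sub>Y"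
  unfolding D_def using T_HY subspace_HY by (simp add: subspace_diff subspace_scale)

lemma D_square_factor:
  assumes "a + b = 2 * c0"
  shows "T (T y - b *\<^sub>R y) - a *\<^sub>R (T y - b *\<^sub>R y) = D (D y) - (c0\<^sup>2 - a * b) *\<^sub>R y"
proof -
  have "T (T y - b *\<^sub>R y) - a *\<^sub>R (T y - b *\<^sub>R y) = T (T y) - (a + b) *\<^sub>R T y + (a * b) *\<^sub>R y"
    by (simp add: T.diff T.scaleR algebra_simps)
  also have "\<dots> = D (D y) - (c0\<^sup>2 - a * b) *\<^sub>R y"
    unfolding assms D_def
    by (simp add: T.diff T.scaleR algebra_simps power2_eq_square scaleR_2 flip: scaleR_add_left)
  finally show ?thesis .
qed

lemma D_square_shift_inverse:
  assumes "0 < \<rho>" "\<rho> < 1 / e"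
  obtains Q where "bounded_linear Q" "\<And>y z. inner (Q y) z = inner y (Q z)"
    "\<And>y. y \<in> H\<^sub>Y \<Longrightarrow> Q y \<in> H\<^sub>Y" "\<And>y. Q (D (D y) - \<rho>\<^sup>2 *\<^sub>R y) = y" "\<And>y. D (D (Q y)) - \<rho>\<^sup>2 *\<^sub>R Q y = y"
proof -
  obtain Q1 where Q1: "bounded_linear Q1" "\<And>y z. inner (Q1 y) z = inner y (Q1 z)"
      "\<And>y. y \<in> H\<^sub>Y \<Longrightarrow> Q1 y \<in> H\<^sub>Y" "\<And>y. Q1 (T y - (c0 + \<rho>) *\<^sub>R y) = y"
      "\<And>y. T (Q1 y) - (c0 + \<rho>) *\<^sub>R Q1 y = y"
    by (rule shifted_T_inverse[of "c0 + \<rho>"]) (use assms in auto)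
  obtain Q2 where Q2: "bounded_linear Q2" "\<And>y z. inner (Q2 y) z = inner y (Q2 z)"
      "\<And>y. y \<in> H\<^sub>Y \<Longrightarrow> Q2 y \<in> H\<^sub>Y" "\<And>y. Q2 (T y - (c0 - \<rho>) *\<^sub>R y) = y"
      "\<And>y. T (Q2 y) - (c0 - \<rho>) *\<^sub>R Q2 y = y"
    by (rule shifted_T_inverse[of "c0 - \<rho>"]) (use assms in auto)
  define E where "E y = D (D y) - \<rho>\<^sup>2 *\<^sub>R y" for y
  have E1: "E y = T (T y - (c0 - \<rho>) *\<^sub>R y) - (c0 + \<rho>) *\<^sub>R (T y - (c0 - \<rho>) *\<^sub>R y)" for y
    unfolding E_def using D_square_factor[of "c0 + \<rho>" "c0 - \<rho>" y]
    by (simp add: power2_eq_square algebra_simps)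
  have E2: "E y = T (T y - (c0 + \<rho>) *\<^sub>R y) - (c0 - \<rho>) *\<^sub>R (T y - (c0 + \<rho>) *\<^sub>R y)" for y
    unfolding E_def using D_square_factor[of "c0 - \<rho>" "c0 + \<rho>" y]
    by (simp add: power2_eq_square algebra_simps)
  define Q where "Q y = Q2 (Q1 y)" for y
  have QE: "Q (E y) = y" for y unfolding Q_def E1 Q1(4) Q2(4) ..
  have EQ: "E (Q y) = y" for y unfolding Q_def E1 Q2(5) Q1(5) ..
  have "Q1 (Q2 z) = Q z" for z
    using QE[of "Q1 (Q2 z)"] unfolding E2 Q1(5) Q2(5) by simp
  then have "inner (Q y) z = inner y (Q z)" for y z unfolding Q_def by (metis Q1(2) Q2(2))
  moreover have "bounded_linear Q"
    unfolding Q_def[abs_def] using bounded_linear_compose[OF Q2(1) Q1(1)] by simp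
  moreover have "y \<in> H\<^sub>Y \<Longrightarrow> Q y \<in> H\<^sub>Y" for y unfolding Q_def using Q1(3) Q2(3) by blast
  ultimately show ?thesis using that QE EQ unfolding E_def by blast
qed

lemma approx_eigenvalue_D_square:
  assumes "approx_eigenvalue (\<lambda>y. D (D y)) H\<^sub>Y \<nu>" shows "\<nu> = 0 \<or> 1 / e\<^sup>2 \<le> \<nu>"
proof (rule ccontr)
  assume "\<not> ?thesis"
  then consider "\<nu> < 0" | "0 < \<nu>" "\<nu> < 1 / e\<^sup>2" by linarith
  then show False
  proof cases
    case 1
    have "norm y \<le> (- 1 / \<nu>) * norm (D (D y) - \<nu> *\<^sub>R y)" for y
    proof -
      have "- \<nu> * (norm y)\<^sup>2 \<le> (norm (D y))\<^sup>2 - \<nu> * (norm y)\<^sup>2" by simp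
      also have "\<dots> = inner (D (D y) - \<nu> *\<^sub>R y) y"
        by (simp add: inner_diff_left D_self_adjoint power2_norm_eq_inner)
      also have "\<dots> \<le> norm (D (D y) - \<nu> *\<^sub>R y) * norm y" by (rule norm_cauchy_schwarz)
      finally have "norm y * (- \<nu> * norm y) \<le> norm y * norm (D (D y) - \<nu> *\<^sub>R y)"
        by (simp add: power2_eq_square algebra_simps)
      then have "- \<nu> * norm y \<le> norm (D (D y) - \<nu> *\<^sub>R y)"
        using mult_le_cancel_left_pos[of "norm y" "- \<nu> * norm y"] by (cases "y = 0") auto
      then show ?thesis using 1 by (simp add: field_simps)
    qed
    then have "\<not> approx_eigenvalue (\<lambda>y. D (D y)) H\<^sub>Y \<nu>"
      using 1 by (intro not_approx_eigenvalue_if_bounded_below[of "- 1 / \<nu>"]) auto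
    then show False using assms by contradiction
  next
    case 2
    define \<rho> where "\<rho> = sqrt \<nu>"
    have "sqrt (1 / e\<^sup>2) = 1 / e" using e_pos by (simp add: real_sqrt_divide)
    then have \<rho>: "0 < \<rho>" "\<rho> < 1 / e" "\<rho>\<^sup>2 = \<nu>"
      unfolding \<rho>_def using 2 by (metis real_sqrt_gt_zero, metis real_sqrt_less_iff, simp)
    obtain Q where Q: "bounded_linear Q" "\<And>y. Q (D (D y) - \<rho>\<^sup>2 *\<^sub>R y) = y"
      using D_square_shift_inverse[OF \<rho>(1,2)] by metis
    obtain K where K: "\<And>x. norm (Q x) \<le> norm x * K" "K > 0"
      using bounded_linear.pos_bounded[OF Q(1)] by blast
    have "norm y \<le> K * norm (D (D y) - \<nu> *\<^sub>R y)" for y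
      using K(1)[of "D (D y) - \<nu> *\<^sub>R y"] Q(2)[of y] \<rho>(3) by (simp add: mult.commute)
    then have "\<not> approx_eigenvalue (\<lambda>y. D (D y)) H\<^sub>Y \<nu>"
      using K(2) by (intro not_approx_eigenvalue_if_bounded_below[of K]) auto
    then show False using assms by contradiction
  qed
qed

lemma D_square_shift_bounded_below:
  assumes v: "v \<in> H\<^sub>Y" and unit: "\<exists>y\<in>H\<^sub>Y. norm y = 1"
  defines "\<gamma> \<equiv> 1 / (4 * e\<^sup>2)"
  shows "\<gamma> * norm v \<le> norm (D (D v) - \<gamma> *\<^sub>R v)"
proof -
  have \<gamma>: "\<gamma> = (1 / (2 * e))\<^sup>2" unfolding \<gamma>_def by (simp add: power2_eq_square)
  have \<rho>: "0 < 1 / (2 * e)" "1 / (2 * e) < 1 / e" using e_pos by (simp_all add: field_simps)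
  obtain Q where Q: "bounded_linear Q" "\<And>y z. inner (Q y) z = inner y (Q z)"
      "\<And>y. y \<in> H\<^sub>Y \<Longrightarrow> Q y \<in> H\<^sub>Y" "\<And>y. Q (D (D y) - \<gamma> *\<^sub>R y) = y" "\<And>y. D (D (Q y)) - \<gamma> *\<^sub>R Q y = y"
    unfolding \<gamma> using D_square_shift_inverse[OF \<rho>] by blast
  show ?thesis
  proof (rule self_adjoint_inverse_bounded_below[OF _ _ Q(1,2,3) Q(4) Q(5) subspace_HY unit _ v])
    show "linear (\<lambda>y. D (D y) - \<gamma> *\<^sub>R y)"
      by (simp add: linear_compose_sub D.linear_axioms linear_compose[OF D.linear_axioms D.linear_axioms,
            unfolded o_def] linear_scaleR)
    show "D (D y) - \<gamma> *\<^sub>R y \<in> H\<^sub>Y" if "y \<in> H\<^sub>Y" for y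
      using that D_HY subspace_HY by (simp add: subspace_diff subspace_scale)
    show "\<gamma> \<le> \<bar>\<nu>\<bar>" if "approx_eigenvalue (\<lambda>y. D (D y) - \<gamma> *\<^sub>R y) H\<^sub>Y \<nu>" for \<nu>
    proof -
      have "\<gamma> + \<nu> = 0 \<or> 1 / e\<^sup>2 \<le> \<gamma> + \<nu>"
        using approx_eigenvalue_D_square[OF approx_eigenvalue_shift[OF that]] .
      moreover have "1 / e\<^sup>2 = 4 * \<gamma>" "\<gamma> > 0" unfolding \<gamma>_def using e_pos by simp_all
      ultimately show ?thesis by linarith
    qed
  qed
qed

lemma D_range_bounded_below:
  assumes v: "v \<in> H\<^sub>Y" shows "1 / (2 * e\<^sup>2) * (norm (D v))\<^sup>2 \<le> (norm (D (D v)))\<^sup>2"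
proof (cases "v = 0")
  case False
  define \<gamma> where "\<gamma> = 1 / (4 * e\<^sup>2)"
  have "\<gamma> * norm v \<le> norm (D (D v) - \<gamma> *\<^sub>R v)"
    unfolding \<gamma>_def using subspace_has_unit_vector[OF subspace_HY v False]
    by (rule D_square_shift_bounded_below[OF v])
  then have "(\<gamma> * norm v)\<^sup>2 \<le> (norm (D (D v) - \<gamma> *\<^sub>R v))\<^sup>2"
    using e_pos unfolding \<gamma>_def by (intro power_mono) auto
  also have "\<dots> = (norm (D (D v)))\<^sup>2 - 2 * \<gamma> * (norm (D v))\<^sup>2 + (\<gamma> * norm v)\<^sup>2"
    unfolding power2_norm_diff using e_pos
    by (simp add: D_self_adjoint power2_norm_eq_inner power_mult_distrib \<gamma>_def)
  finally have "2 * \<gamma> * (norm (D v))\<^sup>2 \<le> (norm (D (D v)))\<^sup>2" by simp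
  moreover have "2 * \<gamma> = 1 / (2 * e\<^sup>2)" unfolding \<gamma>_def by simp
  ultimately show ?thesis by simp
qed simp

lemma D_kernel: assumes "z \<in> H\<^sub>Y" "D z = 0" shows "z = 0"
proof -
  define b where "b = (- e / 2) *\<^sub>R R z"
  have Tz: "T z = c0 *\<^sub>R z" using assms(2) unfolding D_def by simp
  have "incl b = (- e / 2) *\<^sub>R T z" unfolding b_def T_def by (simp add: incl.scale incl.neg)
  also have "\<dots> = z" using Tz e_pos by (simp add: c0_def)
  finally have ib: "incl b = z" .
  have "L (R z) = z + (lam + e / 2) *\<^sub>R T z"
    using resolvent_right_inverse[OF R0, of z] unfolding T_def by (simp add: algebra_simps)
  also have "\<dots> = (1 + (lam + e / 2) * c0) *\<^sub>R z" unfolding Tz by (simp add: algebra_simps)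
  also have "1 + (lam + e / 2) * c0 = - 2 * lam / e" using e_pos unfolding c0_def by (simp add: field_simps)
  finally have "L b = (- e / 2) *\<^sub>R ((- 2 * lam / e) *\<^sub>R z)" unfolding b_def by (simp only: L.scale)
  then have "L b = lam *\<^sub>R incl b" unfolding ib using e_pos by simp
  then obtain k where "b = k *\<^sub>R phi" using simple by blast
  then have "z = k *\<^sub>R incl phi" using ib by (simp add: incl.scale)
  moreover have "inner z (incl phi) = 0" using assms(1) HY_iff by simp
  ultimately show ?thesis by (simp add: inner_phi_phi)
qed

lemma D_resolvent_image: "D (L a - (lam + e / 2) *\<^sub>R incl a) = (2 / e) *\<^sub>R (L a - lam *\<^sub>R incl a)"
proof -
  have "D (L a - (lam + e / 2) *\<^sub>R incl a) = incl a + (2 / e) *\<^sub>R (L a - (lam + e / 2) *\<^sub>R incl a)"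
    unfolding D_def T_def c0_def by (simp add: resolvent_left_inverse[OF R0])
  also have "\<dots> = (1 - 2 / e * (lam + e / 2)) *\<^sub>R incl a + (2 / e) *\<^sub>R L a"
    by (simp add: algebra_simps)
  also have "1 - 2 / e * (lam + e / 2) = - (2 / e * lam)" using e_pos by (simp add: field_simps)
  finally show ?thesis by (simp add: algebra_simps)
qed

lemma D_bounded_below: "y \<in> H\<^sub>Y \<Longrightarrow> 1 / (2 * e\<^sup>2) * (norm y)\<^sup>2 \<le> (norm (D y))\<^sup>2"
  using e_pos
  by (intro self_adjoint_bounded_below_of_range[OF bounded_linear_D D_self_adjoint closed_HY subspace_HY
        D_HY D_kernel _ D_range_bounded_below]) auto

end

lemma lam_not_restricted_approx_eigenvalue: "\<not> restricted_approx_eigenvalue lam"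
proof
  assume ap: "restricted_approx_eigenvalue lam"
  have "lam + e / 2 \<notin> op_spectrum incl L" using isolated[of "lam + e / 2"] e_pos by force
  then obtain R where R: "resolvent (lam + e / 2) R" using not_in_spectrum_iff by blast
  have "e / 8 > 0" using e_pos by simp
  then obtain a where a: "a \<in> H\<^sub>X" "norm (incl a) = 1" "norm (L a - lam *\<^sub>R incl a) < e / 8"
    using ap unfolding restricted_approx_eigenvalue_def by blast
  define y where "y = L a - (lam + e / 2) *\<^sub>R incl a"
  have y: "y = (L a - lam *\<^sub>R incl a) - (e / 2) *\<^sub>R incl a" unfolding y_def by (simp add: algebra_simps)
  have "y \<in> H\<^sub>Y" unfolding y_def using a(1) L_HX HX_iff subspace_HY
    by (simp add: subspace_diff subspace_scale)
  have "norm (D R y) < 1 / 4" unfolding y_def D_resolvent_image[OF R] using a(3) e_pos by simp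
  then have "(norm (D R y))\<^sup>2 < (1 / 4)\<^sup>2" by (intro power_strict_mono) auto
  moreover have "3 * e / 8 \<le> norm y"
    using norm_triangle_ineq2[of "(e / 2) *\<^sub>R incl a" "L a - lam *\<^sub>R incl a"] a(2,3) e_pos
    unfolding y by (simp add: norm_minus_commute)
  then have "1 / (2 * e\<^sup>2) * (3 * e / 8)\<^sup>2 \<le> 1 / (2 * e\<^sup>2) * (norm y)\<^sup>2"
    using e_pos by (intro mult_left_mono power_mono) auto
  moreover have "1 / (2 * e\<^sup>2) * (3 * e / 8)\<^sup>2 = 9 / 128"
    using e_pos by (simp add: power2_eq_square)
  ultimately show False using D_bounded_below[OF R \<open>y \<in> H\<^sub>Y\<close>] by (simp add: power2_eq_square)
qed

end

section \<open>A spectral gap around zero\<close>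

locale spectral_gap = isolated_simple_eigenvalue +
  fixes n :: real
  assumes n_nonneg: "n \<ge> 0" and gap: "{-n..n} \<inter> op_spectrum incl L = {lam}"
begin

lemma abs_lam_le: "\<bar>lam\<bar> \<le> n"
proof -
  have "lam \<in> {-n..n} \<inter> op_spectrum incl L" unfolding gap by simp
  then show ?thesis by (simp add: abs_le_iff)
qed

lemma spectrum_gap: "s \<in> op_spectrum incl L \<Longrightarrow> \<bar>s\<bar> \<le> n \<Longrightarrow> s = lam"
proof -
  assume "s \<in> op_spectrum incl L" "\<bar>s\<bar> \<le> n"
  then have "s \<in> {-n..n} \<inter> op_spectrum incl L" by (simp add: abs_le_iff)
  then show "s = lam" unfolding gap by simp
qed

lemma resolvent_point_near_zero:
  assumes "\<epsilon> > 0" obtains \<mu> where "\<bar>\<mu>\<bar> < \<epsilon>" "\<mu> \<noteq> lam" "\<mu> \<notin> op_spectrum incl L"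
proof (cases "n > 0")
  case True
  define m where "m = min n (\<epsilon> / 2)"
  have m: "m > 0" "m \<le> n" "m < \<epsilon>" unfolding m_def using True assms by auto
  consider "m \<noteq> lam" | "- m \<noteq> lam" using m by fastforce
  then show ?thesis
  proof cases
    case 1
    then show ?thesis using that[of m] m spectrum_gap[of m] by auto
  next
    case 2
    then show ?thesis using that[of "- m"] m spectrum_gap[of "- m"] by auto
  qed
next
  case False
  then have "lam = 0" using abs_lam_le n_nonneg by simp
  define m where "m = min e \<epsilon> / 2"
  have m: "m > 0" "m < e" "m < \<epsilon>" unfolding m_def using e_pos assms by auto
  then have "m \<notin> op_spectrum incl L" using isolated[of m] \<open>lam = 0\<close> by auto
  then show ?thesis using that[of m] m \<open>lam = 0\<close> by simp
qed

text \<open>The approximate eigenvalues of the part of \<open>L\<close> in \<open>H\<^sub>X\<close> lie in the spectrum but avoid \<open>lam\<close>;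
  being a closed set, they keep a positive distance from \<open>[-n, n]\<close>.\<close>
lemma restricted_approx_spectrum_gap:
  obtains \<delta> where "\<delta> > 0" "\<And>s. restricted_approx_eigenvalue s \<Longrightarrow> n + \<delta> \<le> \<bar>s\<bar>"
proof -
  define A where "A = {s. restricted_approx_eigenvalue s}"
  have outside: "n < \<bar>s\<bar>" if "s \<in> A" for s
    using that restricted_approx_eigenvalue_in_spectrum spectrum_gap lam_not_restricted_approx_eigenvalue
    unfolding A_def by force
  show ?thesis
  proof (cases "A = {}")
    case True
    then show ?thesis using that[of 1] unfolding A_def by auto
  next
    case False
    obtain s0 where "s0 \<in> A" and s0: "\<And>s. s \<in> A \<Longrightarrow> dist 0 s0 \<le> dist 0 s"
      using distance_attains_inf[OF _ False, of 0] closed_restricted_approx_eigenvalues unfolding A_def by blast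
    then show ?thesis using that[of "\<bar>s0\<bar> - n"] outside unfolding A_def by force
  qed
qed

lemma contractive_resolvent:
  obtains \<mu> R \<kappa> where "resolvent \<mu> R" "\<mu> \<noteq> lam" "\<kappa> \<ge> 0" "\<kappa> * (n + \<bar>\<mu>\<bar>) < 1"
    "\<And>y. y \<in> H\<^sub>Y \<Longrightarrow> norm (incl (R y)) \<le> \<kappa> * norm y"
proof -
  obtain \<delta> where "\<delta> > 0" and \<delta>: "\<And>s. restricted_approx_eigenvalue s \<Longrightarrow> n + \<delta> \<le> \<bar>s\<bar>"
    using restricted_approx_spectrum_gap by blast
  then obtain \<mu> where \<mu>: "\<bar>\<mu>\<bar> < \<delta> / 2" "\<mu> \<noteq> lam" "\<mu> \<notin> op_spectrum incl L"
    using resolvent_point_near_zero[of "\<delta> / 2"] by auto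
  then obtain R where R: "resolvent \<mu> R" using not_in_spectrum_iff by blast
  obtain M where M: "M \<ge> 0" "\<And>y. y \<in> H\<^sub>Y \<Longrightarrow> norm (incl (R y)) \<le> M * norm y"
    "M > 0 \<Longrightarrow> restricted_approx_eigenvalue (\<mu> + 1 / M) \<or> restricted_approx_eigenvalue (\<mu> - 1 / M)"
    using resolvent_norm_restricted_approx_eigenvalue[OF R \<mu>(2)] by blast
  have "M * (n + \<bar>\<mu>\<bar>) < 1"
  proof (cases "M = 0")
    case False
    then have "M > 0" using M(1) by simp
    then consider "restricted_approx_eigenvalue (\<mu> + 1 / M)" | "restricted_approx_eigenvalue (\<mu> - 1 / M)"
      using M(3) by blast
    then have "n + \<delta> \<le> \<bar>\<mu>\<bar> + 1 / M"
    proof cases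
      case 1
      then show ?thesis using \<delta>[OF 1] abs_triangle_ineq[of \<mu> "1 / M"] \<open>M > 0\<close> by simp
    next
      case 2
      then show ?thesis using \<delta>[OF 2] abs_triangle_ineq4[of \<mu> "1 / M"] \<open>M > 0\<close> by simp
    qed
    then have "n + \<bar>\<mu>\<bar> < 1 / M" using \<mu>(1) by linarith
    then show ?thesis using False M(1) by (simp add: field_simps)
  qed simp
  then show ?thesis using that R \<mu>(2) M(1,2) by blast
qed

end

section \<open>Fibers, their tangents and the height function\<close>

lemma invertible_opI:
  fixes T :: "'a::real_normed_vector \<Rightarrow>\<^sub>L 'b::real_normed_vector"
  assumes "bounded_linear S" "\<And>y. T (S y) = y" "\<And>b. T b = 0 \<Longrightarrow> b = 0"
  shows "invertible_op T"
proof -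
  have "S (T b) = b" for b
    using assms(3)[of "S (T b) - b"] assms(2)[of "T b"] by (simp add: blinfun.diff_right)
  then show ?thesis
    unfolding invertible_op_def using assms(2) bounded_linear_Blinfun_apply[OF assms(1)]
    by (intro exI[of _ "Blinfun S"]) simp
qed

locale fiber_setting = spectral_gap +
  fixes N and DF and \<mu> :: real and R and \<kappa> :: real
  assumes lipschitz_N: "\<And>t. n-lipschitz_on H\<^sub>Y (\<lambda>w. projP (incl phi) (N (w + t *\<^sub>R incl phi)))"
    and has_derivative_F: "\<And>a. (Fop incl L N has_derivative blinfun_apply (DF a)) (at a)"
    and resolvent_\<mu>: "resolvent \<mu> R" and \<mu>_ne_lam: "\<mu> \<noteq> lam"
    and \<kappa>_nonneg: "\<kappa> \<ge> 0" and contraction: "\<kappa> * (n + \<bar>\<mu>\<bar>) < 1"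
    and resolvent_bound: "\<And>y. y \<in> H\<^sub>Y \<Longrightarrow> norm (incl (R y)) \<le> \<kappa> * norm y"
begin

interpretation incl: linear incl by (rule linear_incl)
interpretation L: linear L by (rule linear_L)
interpretation R: bounded_linear R by (rule bounded_linear_resolvent[OF resolvent_\<mu>])

abbreviation "P \<equiv> projP (incl phi)"
abbreviation "F \<equiv> Fop incl L N"

definition q :: real where "q = \<kappa> * (n + \<bar>\<mu>\<bar>)"

lemma q_nonneg: "q \<ge> 0" and q_less_1: "q < 1"
  unfolding q_def using \<kappa>_nonneg n_nonneg contraction by auto

lemma P_HY: "P y \<in> H\<^sub>Y"
  unfolding projP_def HY_iff by (simp add: inner_diff_left inner_phi_phi)

lemma P_id: "y \<in> H\<^sub>Y \<Longrightarrow> P y = y"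
  unfolding projP_def HY_iff by simp

lemma P_decomposition: "y = P y + inner y (incl phi) *\<^sub>R incl phi"
  unfolding projP_def by simp

lemma P_phi: "P (c *\<^sub>R incl phi) = 0"
  unfolding projP_def by (simp add: inner_phi_phi)

lemma linear_P: "linear P"
  unfolding projP_def by (rule linearI) (simp_all add: inner_add_left algebra_simps)

interpretation P: linear P by (rule linear_P)

lemma norm_P_le: "norm (P y) \<le> norm y"
proof -
  have "(norm (P y))\<^sup>2 = (norm y)\<^sup>2 - (inner y (incl phi))\<^sup>2"
    unfolding projP_def power2_norm_diff using norm_phi
    by (simp add: power2_eq_square)
  then have "(norm (P y))\<^sup>2 \<le> (norm y)\<^sup>2" by simp
  then show ?thesis by (rule power2_le_imp_le) simp
qed

lemma bounded_linear_P: "bounded_linear P"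
  by (rule bounded_linear_intro[of _ 1]) (simp_all add: P.add P.scale norm_P_le)

text \<open>Equations \<open>L w - P (G w) = z\<close> on \<open>H\<^sub>X\<close>, where \<open>P \<circ> G\<close> is \<open>n\<close>-Lipschitz with respect to the
  norm of \<open>Y\<close>: both the fibers of \<open>F\<close> and their linearization are of this form. Writing
  \<open>L w - \<mu> w = z + \<sigma>\<close> turns them into a fixed point problem for \<open>\<sigma>\<close> with contraction constant \<open>q\<close>.\<close>
definition lipschitz_perturbation :: "('a \<Rightarrow> 'b) \<Rightarrow> bool" where
  "lipschitz_perturbation G \<longleftrightarrow>
     (\<forall>v1\<in>H\<^sub>X. \<forall>v2\<in>H\<^sub>X. norm (P (G v1) - P (G v2)) \<le> n * norm (incl v1 - incl v2))"

text \<open>Precomposing with \<open>P\<close> extends the map from \<open>H\<^sub>Y\<close> to all of \<open>Y\<close>, where the fixed point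
  theorem for complete spaces applies.\<close>
definition perturbation_map :: "('a \<Rightarrow> 'b) \<Rightarrow> 'b \<Rightarrow> 'b \<Rightarrow> 'b" where
  "perturbation_map G z \<sigma> = P (G (R (z + P \<sigma>))) - \<mu> *\<^sub>R incl (R (z + P \<sigma>))"

lemma resolvent_shift_HX: "z \<in> H\<^sub>Y \<Longrightarrow> R (z + P \<sigma>) \<in> H\<^sub>X"
  using resolvent_HY[OF resolvent_\<mu> \<mu>_ne_lam] P_HY subspace_HY by (simp add: subspace_add)

lemma perturbation_map_HY: "z \<in> H\<^sub>Y \<Longrightarrow> perturbation_map G z \<sigma> \<in> H\<^sub>Y"
  unfolding perturbation_map_def using P_HY resolvent_shift_HX HX_iff subspace_HY
  by (simp add: subspace_diff subspace_scale)

lemma perturbation_map_contraction: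
  assumes G: "lipschitz_perturbation G" and z: "z \<in> H\<^sub>Y"
  shows "dist (perturbation_map G z \<sigma>1) (perturbation_map G z \<sigma>2) \<le> q * dist \<sigma>1 \<sigma>2"
proof -
  define d where "d = incl (R (z + P \<sigma>1)) - incl (R (z + P \<sigma>2))"
  have "d = incl (R (P (\<sigma>1 - \<sigma>2)))" unfolding d_def by (simp add: R.add R.diff P.diff incl.add incl.diff)
  then have nd: "norm d \<le> \<kappa> * norm (\<sigma>1 - \<sigma>2)"
    using resolvent_bound[OF P_HY] norm_P_le \<kappa>_nonneg by (metis mult_left_mono order.trans)
  have "perturbation_map G z \<sigma>1 - perturbation_map G z \<sigma>2
      = (P (G (R (z + P \<sigma>1))) - P (G (R (z + P \<sigma>2)))) - \<mu> *\<^sub>R d"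
    unfolding perturbation_map_def d_def by (simp add: algebra_simps)
  then have "dist (perturbation_map G z \<sigma>1) (perturbation_map G z \<sigma>2)
      \<le> norm (P (G (R (z + P \<sigma>1))) - P (G (R (z + P \<sigma>2)))) + \<bar>\<mu>\<bar> * norm d"
    by (metis dist_norm norm_scaleR norm_triangle_ineq4)
  also have "\<dots> \<le> (n + \<bar>\<mu>\<bar>) * norm d"
    using G resolvent_shift_HX[OF z] unfolding lipschitz_perturbation_def d_def by (simp add: algebra_simps)
  also have "\<dots> \<le> (n + \<bar>\<mu>\<bar>) * (\<kappa> * norm (\<sigma>1 - \<sigma>2))"
    using nd n_nonneg by (intro mult_left_mono) auto
  also have "\<dots> = q * dist \<sigma>1 \<sigma>2" unfolding q_def dist_norm by simp
  finally show ?thesis .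
qed

lemma perturbation_map_fixed_point_iff:
  assumes "w \<in> H\<^sub>X" "z \<in> H\<^sub>Y"
  shows "L w - P (G w) = z \<longleftrightarrow>
    perturbation_map G z (L w - \<mu> *\<^sub>R incl w - z) = L w - \<mu> *\<^sub>R incl w - z"
proof -
  have "L w - \<mu> *\<^sub>R incl w - z \<in> H\<^sub>Y"
    using assms L_HX HX_iff subspace_HY by (simp add: subspace_diff subspace_scale)
  then have "R (z + P (L w - \<mu> *\<^sub>R incl w - z)) = w"
    by (simp add: P_id resolvent_left_inverse[OF resolvent_\<mu>])
  then show ?thesis unfolding perturbation_map_def by auto
qed

lemma perturbed_equation_unique_solution:
  assumes G: "lipschitz_perturbation G" and z: "z \<in> H\<^sub>Y"
  shows "\<exists>!w. w \<in> H\<^sub>X \<and> L w - P (G w) = z"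
proof -
  obtain \<sigma> where \<sigma>: "perturbation_map G z \<sigma> = \<sigma>"
    and \<sigma>_unique: "\<And>\<sigma>'. perturbation_map G z \<sigma>' = \<sigma>' \<Longrightarrow> \<sigma>' = \<sigma>"
    using banach_fix_type[OF q_nonneg q_less_1] perturbation_map_contraction[OF G z] by metis
  then have "\<sigma> \<in> H\<^sub>Y" using perturbation_map_HY[OF z] by metis
  show ?thesis
  proof
    define w where "w = R (z + \<sigma>)"
    have "w \<in> H\<^sub>X" unfolding w_def using resolvent_shift_HX[OF z, of \<sigma>] P_id[OF \<open>\<sigma> \<in> H\<^sub>Y\<close>] by simp
    moreover have "L w - \<mu> *\<^sub>R incl w - z = \<sigma>"
      unfolding w_def using resolvent_right_inverse[OF resolvent_\<mu>] by simp
    ultimately show "w \<in> H\<^sub>X \<and> L w - P (G w) = z" using perturbation_map_fixed_point_iff[OF _ z] \<sigma> by simp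
    show "w' = w" if "w' \<in> H\<^sub>X \<and> L w' - P (G w') = z" for w'
    proof -
      have "L w' - \<mu> *\<^sub>R incl w' = z + \<sigma>"
        using that perturbation_map_fixed_point_iff[OF _ z] \<sigma>_unique by (metis diff_add_cancel add.commute)
      then show ?thesis unfolding w_def using resolvent_left_inverse[OF resolvent_\<mu>, of w'] by simp
    qed
  qed
qed

lemma perturbed_equation_stability:
  assumes G: "lipschitz_perturbation G" and w: "w \<in> H\<^sub>X" "w' \<in> H\<^sub>X"
    and eq: "L w - P (G w) = z" "L w' - P (G' w') = z'"
  shows "norm (w - w') \<le> onorm R / (1 - q) * (norm (z - z') + norm (P (G w') - P (G' w')))"
proof -
  define d where "d = norm (z - z') + norm (P (G w') - P (G' w'))"
  define y where "y = L (w - w') - \<mu> *\<^sub>R incl (w - w')"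
  have "w - w' \<in> H\<^sub>X" using w subspace_HX by (simp add: subspace_diff)
  then have "y \<in> H\<^sub>Y" unfolding y_def using L_HX HX_iff subspace_HY by (simp add: subspace_diff subspace_scale)
  have Ry: "R y = w - w'" unfolding y_def by (rule resolvent_left_inverse[OF resolvent_\<mu>])
  have "y = (z - z') + (P (G w) - P (G w')) + (P (G w') - P (G' w')) - \<mu> *\<^sub>R incl (w - w')"
    unfolding y_def using eq by (simp add: L.diff algebra_simps)
  then have "norm y \<le> norm (z - z') + norm (P (G w) - P (G w')) + norm (P (G w') - P (G' w'))
      + \<bar>\<mu>\<bar> * norm (incl (w - w'))"
    using norm_triangle_ineq4[of "(z - z') + (P (G w) - P (G w')) + (P (G w') - P (G' w'))"
        "\<mu> *\<^sub>R incl (w - w')"]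
      norm_triangle_ineq[of "(z - z') + (P (G w) - P (G w'))" "P (G w') - P (G' w')"]
      norm_triangle_ineq[of "z - z'" "P (G w) - P (G w')"]
    by simp
  also have "\<dots> \<le> d + (n + \<bar>\<mu>\<bar>) * norm (incl (w - w'))"
    using G w unfolding lipschitz_perturbation_def d_def by (simp add: incl.diff algebra_simps)
  also have "\<dots> \<le> d + (n + \<bar>\<mu>\<bar>) * (\<kappa> * norm y)"
    using resolvent_bound[OF \<open>y \<in> H\<^sub>Y\<close>] n_nonneg unfolding Ry by (intro add_left_mono mult_left_mono) auto
  finally have "(1 - q) * norm y \<le> d" unfolding q_def by (simp add: algebra_simps)
  then have "norm y \<le> d / (1 - q)" using q_less_1 by (simp add: field_simps)
  have "norm (w - w') \<le> onorm R * norm y"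
    using onorm[OF R.bounded_linear_axioms, of y] unfolding Ry .
  also have "\<dots> \<le> onorm R * (d / (1 - q))"
    using \<open>norm y \<le> d / (1 - q)\<close> onorm_pos_le[OF R.bounded_linear_axioms] by (rule mult_left_mono)
  finally show ?thesis unfolding d_def by simp
qed

abbreviation "fiber \<equiv> fiber_w incl L N phi"

lemma P_F_eq: "w \<in> H\<^sub>X \<Longrightarrow> P (F (w + t *\<^sub>R phi)) = L w - P (N (incl w + t *\<^sub>R incl phi))"
  unfolding Fop_def using L_HX
  by (simp add: L.add L.scale incl.add incl.scale eigenvector P.diff P.add P_id P_phi)

lemma lipschitz_perturbation_N: "lipschitz_perturbation (\<lambda>w. N (incl w + t *\<^sub>R incl phi))"
  using lipschitz_N[of t] unfolding lipschitz_perturbation_def lipschitz_on_def dist_norm by (auto simp: HX_iff)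

lemma fiber_unique: "z \<in> H\<^sub>Y \<Longrightarrow> \<exists>!w. w \<in> H\<^sub>X \<and> P (F (w + t *\<^sub>R phi)) = z"
  using perturbed_equation_unique_solution[OF lipschitz_perturbation_N] P_F_eq by (metis (no_types, lifting))

lemma fiber_in_HX: "z \<in> H\<^sub>Y \<Longrightarrow> fiber z t \<in> H\<^sub>X"
  and P_F_fiber: "z \<in> H\<^sub>Y \<Longrightarrow> P (F (fiber z t + t *\<^sub>R phi)) = z"
  using theI'[OF fiber_unique, of z t] unfolding fiber_w_def HX_def[symmetric] by auto

lemma has_derivative_N_incl: "((\<lambda>b. N (incl b)) has_derivative (\<lambda>v. L v - DF a v)) (at a)"
proof -
  have "((\<lambda>b. L b - F b) has_derivative (\<lambda>v. L v - DF a v)) (at a)"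
    by (intro has_derivative_diff bounded_linear.has_derivative[OF bounded_linear_L]
        has_derivative_F has_derivative_ident)
  then show ?thesis by (simp add: Fop_def)
qed

lemma continuous_fiber:
  assumes z: "z \<in> H\<^sub>Y" shows "((\<lambda>t. fiber z t) \<longlongrightarrow> fiber z t0) (at t0)"
proof -
  define g where "g t = P (N (incl (fiber z t0 + t *\<^sub>R phi)))" for t
  have "isCont (\<lambda>t. fiber z t0 + t *\<^sub>R phi) t0" by (intro continuous_intros)
  then have "isCont (\<lambda>t. N (incl (fiber z t0 + t *\<^sub>R phi))) t0"
    using isCont_o2 has_derivative_continuous[OF has_derivative_N_incl] by blast
  then have "isCont g t0" unfolding g_def by (intro isCont_o2[OF _ linear_continuous_at[OF bounded_linear_P]])
  then have g: "((\<lambda>t. g t - g t0) \<longlongrightarrow> 0) (at t0)" by (simp add: isCont_def LIM_zero)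
  have eq: "L (fiber z s) - P (N (incl (fiber z s) + s *\<^sub>R incl phi)) = z" for s
    using P_F_eq[OF fiber_in_HX[OF z]] P_F_fiber[OF z] by simp
  have bound: "norm (fiber z t - fiber z t0) \<le> onorm R / (1 - q) * norm (g t - g t0)" for t
    using perturbed_equation_stability[where G = "\<lambda>w. N (incl w + t *\<^sub>R incl phi)"
        and G' = "\<lambda>w. N (incl w + t0 *\<^sub>R incl phi)",
        OF lipschitz_perturbation_N fiber_in_HX[OF z] fiber_in_HX[OF z] eq eq]
    unfolding g_def by (simp add: incl.add incl.scale)
  have "((\<lambda>t. fiber z t - fiber z t0) \<longlongrightarrow> 0) (at t0)"
  proof (rule Lim_null_comparison)
    show "\<forall>\<^sub>F t in at t0. norm (fiber z t - fiber z t0) \<le> onorm R / (1 - q) * norm (g t - g t0)"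
      using bound by simp
    show "((\<lambda>t. onorm R / (1 - q) * norm (g t - g t0)) \<longlongrightarrow> 0) (at t0)"
      using tendsto_mult_right_zero[OF tendsto_norm_zero[OF g]] .
  qed
  then show ?thesis by (simp add: LIM_zero_iff)
qed

text \<open>The derivative of the Lipschitz map \<open>P \<circ> N\<close> inherits its Lipschitz constant.\<close>
lemma norm_P_derivative_N_le:
  assumes v: "v \<in> H\<^sub>X" shows "norm (P (L v - DF a v)) \<le> n * norm (incl v)"
proof (rule has_derivative_norm_le_lipschitz)
  have "((\<lambda>h::real. a + h *\<^sub>R v) has_derivative (\<lambda>h. h *\<^sub>R v)) (at 0)"
    by (auto intro!: derivative_eq_intros)
  moreover have "((\<lambda>b. N (incl b)) has_derivative (\<lambda>u. L u - DF a u)) (at ((\<lambda>h::real. a + h *\<^sub>R v) 0))"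
    using has_derivative_N_incl[of a] by simp
  ultimately have "((\<lambda>h. N (incl (a + h *\<^sub>R v))) has_derivative (\<lambda>h. L (h *\<^sub>R v) - DF a (h *\<^sub>R v))) (at 0)"
    using diff_chain_at by (fastforce simp: o_def)
  from bounded_linear.has_derivative[OF bounded_linear_P this]
  show "((\<lambda>h. P (N (incl (a + h *\<^sub>R v)))) has_derivative (\<lambda>h. h *\<^sub>R P (L v - DF a v))) (at 0)"
    by (simp add: L.scale blinfun.scaleR_right P.scale flip: scaleR_diff_right)
  define c where "c = inner (incl a) (incl phi)"
  have a0: "a - c *\<^sub>R phi \<in> H\<^sub>X" unfolding c_def HX_def by (simp add: incl.diff incl.scale inner_diff_left inner_phi_phi)
  show "norm (P (N (incl (a + h *\<^sub>R v))) - P (N (incl (a + 0 *\<^sub>R v)))) \<le> n * norm (incl v) * \<bar>h\<bar>" for h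
  proof -
    have "a + h *\<^sub>R v - c *\<^sub>R phi \<in> H\<^sub>X" using a0 v subspace_HX
      by (metis (no_types, lifting) add_diff_eq diff_add_eq subspace_add subspace_scale)
    then have "norm (P (N (incl (a + h *\<^sub>R v - c *\<^sub>R phi) + c *\<^sub>R incl phi))
        - P (N (incl (a - c *\<^sub>R phi) + c *\<^sub>R incl phi)))
        \<le> n * norm (incl (a + h *\<^sub>R v - c *\<^sub>R phi) - incl (a - c *\<^sub>R phi))"
      using lipschitz_perturbation_N[of c] a0 unfolding lipschitz_perturbation_def by blast
    then show ?thesis by (simp add: incl.add incl.diff incl.scale algebra_simps)
  qed
qed

lemma lipschitz_perturbation_linearized: "lipschitz_perturbation (\<lambda>v. L v - DF a v)"
  unfolding lipschitz_perturbation_def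
proof (intro ballI)
  fix v1 v2 assume "v1 \<in> H\<^sub>X" "v2 \<in> H\<^sub>X"
  then have "v1 - v2 \<in> H\<^sub>X" using subspace_HX by (simp add: subspace_diff)
  from norm_P_derivative_N_le[OF this]
  show "norm (P (L v1 - DF a v1) - P (L v2 - DF a v2)) \<le> n * norm (incl v1 - incl v2)"
    by (simp add: L.diff incl.diff P.diff P.add blinfun.diff_right algebra_simps)
qed

lemma P_DF_eq: "v \<in> H\<^sub>X \<Longrightarrow> P (DF a v) = L v - P (L v - DF a v)"
  using L_HX by (simp add: P.diff P_id)

definition linearized_solution :: "'a \<Rightarrow> 'b \<Rightarrow> 'a" where
  "linearized_solution a y = (THE v. v \<in> H\<^sub>X \<and> P (DF a v) = P y)"

lemma linearized_unique: "\<exists>!v. v \<in> H\<^sub>X \<and> P (DF a v) = P y"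
  using perturbed_equation_unique_solution[OF lipschitz_perturbation_linearized P_HY] P_DF_eq
  by (metis (no_types, lifting))

lemma linearized_solution_in_HX: "linearized_solution a y \<in> H\<^sub>X"
  and P_DF_linearized_solution: "P (DF a (linearized_solution a y)) = P y"
  using theI'[OF linearized_unique] unfolding linearized_solution_def by auto

lemma linearized_solution_unique: "v \<in> H\<^sub>X \<Longrightarrow> P (DF a v) = P y \<Longrightarrow> linearized_solution a y = v"
  using the1_equality[OF linearized_unique] unfolding linearized_solution_def by blast

lemma norm_linearized_solution_le: "norm (linearized_solution a y) \<le> onorm R / (1 - q) * norm y"
proof -
  have "L (linearized_solution a y) - P (L (linearized_solution a y) - DF a (linearized_solution a y)) = P y"
    using P_DF_eq linearized_solution_in_HX P_DF_linearized_solution by metis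
  moreover have "L 0 - P (L 0 - DF a 0) = 0" by (simp add: L.zero P.zero)
  ultimately have "norm (linearized_solution a y) \<le> onorm R / (1 - q) * norm (P y)"
    using perturbed_equation_stability[OF lipschitz_perturbation_linearized linearized_solution_in_HX]
      subspace_0[OF subspace_HX] by fastforce
  also have "\<dots> \<le> onorm R / (1 - q) * norm y"
    using norm_P_le onorm_pos_le[OF R.bounded_linear_axioms] q_less_1 by (intro mult_left_mono) auto
  finally show ?thesis .
qed

lemma bounded_linear_linearized_solution: "bounded_linear (linearized_solution a)"
proof (rule bounded_linear_intro[OF _ _ norm_linearized_solution_le[unfolded mult.commute[of _ "norm _"]]])
  show "linearized_solution a (y1 + y2) = linearized_solution a y1 + linearized_solution a y2" for y1 y2
    using linearized_solution_in_HX P_DF_linearized_solution subspace_HX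
    by (intro linearized_solution_unique) (simp_all add: subspace_add blinfun.add_right P.add)
  show "linearized_solution a (c *\<^sub>R y) = c *\<^sub>R linearized_solution a y" for c y
    using linearized_solution_in_HX P_DF_linearized_solution subspace_HX
    by (intro linearized_solution_unique) (simp_all add: subspace_scale blinfun.scaleR_right P.scale)
qed

text \<open>Subtracting the fiber equations at \<open>t\<close> and \<open>t0\<close> leaves the linearized equation, with the
  Taylor remainder of \<open>F\<close> as right-hand side.\<close>
lemma fiber_increment:
  fixes t0 t :: real
  assumes z: "z \<in> H\<^sub>Y"
  defines "a0 \<equiv> fiber z t0 + t0 *\<^sub>R phi"
    and "w' \<equiv> - linearized_solution (fiber z t0 + t0 *\<^sub>R phi) (DF (fiber z t0 + t0 *\<^sub>R phi) phi)"
  shows "fiber z t - fiber z t0 - (t - t0) *\<^sub>R w' = linearized_solution a0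
           (- (F (fiber z t + t *\<^sub>R phi) - F a0 - DF a0 (fiber z t + t *\<^sub>R phi - a0)))"
proof (rule linearized_solution_unique[symmetric])
  have "w' = - linearized_solution a0 (DF a0 phi)" unfolding w'_def a0_def ..
  have "w' \<in> H\<^sub>X" unfolding w'_def using linearized_solution_in_HX subspace_HX by (simp add: subspace_neg)
  then show "fiber z t - fiber z t0 - (t - t0) *\<^sub>R w' \<in> H\<^sub>X"
    using fiber_in_HX[OF z] subspace_HX by (simp add: subspace_diff subspace_scale)
  have "P (DF a0 w') = - P (DF a0 phi)"
    unfolding \<open>w' = _\<close> using P_DF_linearized_solution by (simp add: blinfun.minus_right P.neg)
  moreover have "fiber z t + t *\<^sub>R phi - a0 = (fiber z t - fiber z t0 - (t - t0) *\<^sub>R w') + (t - t0) *\<^sub>R (w' + phi)"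
    unfolding a0_def by (simp add: algebra_simps)
  ultimately show "P (DF a0 (fiber z t - fiber z t0 - (t - t0) *\<^sub>R w'))
      = P (- (F (fiber z t + t *\<^sub>R phi) - F a0 - DF a0 (fiber z t + t *\<^sub>R phi - a0)))"
    using P_F_fiber[OF z, of t] P_F_fiber[OF z, of t0] unfolding a0_def
    by (simp add: P.diff P.add P.neg P.scale blinfun.diff_right blinfun.add_right blinfun.scaleR_right
        scaleR_diff_left)
qed

lemma has_derivative_fiber:
  fixes t0 :: real
  assumes z: "z \<in> H\<^sub>Y"
  defines "a0 \<equiv> fiber z t0 + t0 *\<^sub>R phi"
  shows "((\<lambda>t. fiber z t) has_derivative (\<lambda>h. h *\<^sub>R - linearized_solution a0 (DF a0 phi))) (at t0)"
proof -
  define w' where "w' = - linearized_solution a0 (DF a0 phi)"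
  define u where "u t = fiber z t + t *\<^sub>R phi" for t
  define E where "E t = fiber z t - fiber z t0 - (t - t0) *\<^sub>R w'" for t
  define r where "r t = F (u t) - F a0 - DF a0 (u t - a0)" for t
  define C where "C = onorm R / (1 - q)"
  have "C \<ge> 0" unfolding C_def using onorm_pos_le[OF R.bounded_linear_axioms] q_less_1 by simp
  have E: "norm (E t) \<le> C * norm (r t)" for t
  proof -
    have "E t = linearized_solution a0 (- r t)"
      unfolding E_def r_def u_def w'_def a0_def by (rule fiber_increment[OF z])
    then show ?thesis using norm_linearized_solution_le[of a0 "- r t"] unfolding C_def by simp
  qed
  have u: "norm (u t - a0) \<le> norm (E t) + norm (w' + phi) * \<bar>t - t0\<bar>" for t
  proof -
    have "u t - a0 = E t + (t - t0) *\<^sub>R (w' + phi)"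
      unfolding u_def E_def a0_def by (simp add: algebra_simps)
    then show ?thesis by (metis norm_scaleR norm_triangle_ineq real_norm_def mult.commute)
  qed
  have "(u \<longlongrightarrow> a0) (at t0)"
    unfolding u_def a0_def by (intro tendsto_intros continuous_fiber[OF z])
  have r: "\<exists>d>0. \<forall>t. \<bar>t - t0\<bar> < d \<longrightarrow> norm (r t) \<le> \<epsilon> * (norm (E t) + norm (w' + phi) * \<bar>t - t0\<bar>)"
    if "\<epsilon> > 0" for \<epsilon>
  proof -
    have "u t0 = a0" unfolding u_def a0_def ..
    from has_derivative_remainder_along[OF has_derivative_F \<open>(u \<longlongrightarrow> a0) (at t0)\<close> this that]
    obtain d where "d > 0" "\<And>t. \<bar>t - t0\<bar> < d \<Longrightarrow> norm (r t) \<le> \<epsilon> * norm (u t - a0)"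
      unfolding r_def by blast
    then show ?thesis using u \<open>\<epsilon> > 0\<close> by (smt (verit, best) mult_left_mono mult.commute)
  qed
  have "\<exists>d>0. \<forall>t. norm (t - t0) < d \<longrightarrow> norm (fiber z t - fiber z t0 - (t - t0) *\<^sub>R w') \<le> \<epsilon> * norm (t - t0)"
    if "\<epsilon> > 0" for \<epsilon>
    using small_o_absorb[OF E \<open>C \<ge> 0\<close> norm_ge_zero r that] unfolding E_def by simp
  then have "((\<lambda>t. fiber z t) has_derivative (\<lambda>h. h *\<^sub>R w')) (at t0)"
    unfolding has_derivative_at_alt by (simp add: bounded_linear_scaleR_left)
  then show ?thesis unfolding w'_def .
qed

definition fiber_tangent :: "'a \<Rightarrow> 'a" where
  "fiber_tangent a = phi - linearized_solution a (DF a phi)"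

lemma P_DF_fiber_tangent: "P (DF a (fiber_tangent a)) = 0"
  unfolding fiber_tangent_def using P_DF_linearized_solution by (simp add: blinfun.diff_right P.diff)

lemma DF_fiber_tangent:
  "DF a (fiber_tangent a) = inner (DF a (fiber_tangent a)) (incl phi) *\<^sub>R incl phi"
  using P_decomposition[of "DF a (fiber_tangent a)"] by (simp add: P_DF_fiber_tangent)

lemma inner_fiber_tangent: "inner (incl (fiber_tangent a)) (incl phi) = 1"
  using linearized_solution_in_HX unfolding fiber_tangent_def HX_def
  by (simp add: incl.diff inner_diff_left inner_phi_phi)

lemma fiber_tangent_decomposition:
  "b = linearized_solution a (DF a b) + inner (incl b) (incl phi) *\<^sub>R fiber_tangent a"
proof -
  define c where "c = inner (incl b) (incl phi)"
  have "linearized_solution a (DF a b) = b - c *\<^sub>R fiber_tangent a"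
  proof (rule linearized_solution_unique)
    show "b - c *\<^sub>R fiber_tangent a \<in> H\<^sub>X"
      unfolding HX_def c_def by (simp add: incl.diff incl.scale inner_diff_left inner_fiber_tangent)
    show "P (DF a (b - c *\<^sub>R fiber_tangent a)) = P (DF a b)"
      by (simp add: blinfun.diff_right blinfun.scaleR_right P.diff P.scale P_DF_fiber_tangent)
  qed
  then show ?thesis unfolding c_def by simp
qed

lemma DF_injective:
  assumes "inner (DF a (fiber_tangent a)) (incl phi) \<noteq> 0" and "DF a b = 0" shows "b = 0"
proof -
  have "linearized_solution a 0 = 0"
    using linear_0[OF bounded_linear.linear[OF bounded_linear_linearized_solution]] .
  then have b: "b = inner (incl b) (incl phi) *\<^sub>R fiber_tangent a"
    using fiber_tangent_decomposition[of b a] assms(2) by simp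
  then have "DF a b = (inner (incl b) (incl phi) * inner (DF a (fiber_tangent a)) (incl phi)) *\<^sub>R incl phi"
    using DF_fiber_tangent[of a] by (metis blinfun.scaleR_right scaleR_scaleR)
  then have "inner (incl b) (incl phi) = 0" using assms norm_phi by auto
  then show ?thesis using b by simp
qed

text \<open>The inverse of \<open>DF a\<close>, solving its \<open>H\<^sub>Y\<close>-part with \<open>linearized_solution\<close> and its \<open>phi\<close>-part along
  the fiber tangent.\<close>
definition bordered_inverse :: "'a \<Rightarrow> 'b \<Rightarrow> 'a" where
  "bordered_inverse a y = linearized_solution a y +
     ((inner y (incl phi) - inner (DF a (linearized_solution a y)) (incl phi))
       / inner (DF a (fiber_tangent a)) (incl phi)) *\<^sub>R fiber_tangent a"

lemma bounded_linear_bordered_inverse: "bounded_linear (bordered_inverse a)"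
proof -
  interpret J: bounded_linear "linearized_solution a" by (rule bounded_linear_linearized_solution)
  have "bounded_linear (\<lambda>y. inner (DF a (linearized_solution a y)) (incl phi))"
    using bounded_linear_compose[OF bounded_linear_inner_left
        bounded_linear_compose[OF blinfun.bounded_linear_right J.bounded_linear_axioms]] .
  then have "bounded_linear (\<lambda>y. (inner y (incl phi) - inner (DF a (linearized_solution a y)) (incl phi))
      / inner (DF a (fiber_tangent a)) (incl phi))"
    using bounded_linear_compose[OF bounded_linear_divide bounded_linear_sub[OF bounded_linear_inner_left]]
    by blast
  then show ?thesis unfolding bordered_inverse_def[abs_def]
    by (intro bounded_linear_add J.bounded_linear_axioms bounded_linear_scaleR_const)
qed

lemma DF_bordered_inverse:
  assumes "inner (DF a (fiber_tangent a)) (incl phi) \<noteq> 0" shows "DF a (bordered_inverse a y) = y"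
proof -
  define j where "j = DF a (linearized_solution a y)"
  define d where "d = inner (DF a (fiber_tangent a)) (incl phi)"
  have "DF a (fiber_tangent a) = d *\<^sub>R incl phi" unfolding d_def by (rule DF_fiber_tangent)
  then have "DF a (bordered_inverse a y) = j + (inner y (incl phi) - inner j (incl phi)) *\<^sub>R incl phi"
    unfolding bordered_inverse_def j_def d_def[symmetric] using assms[folded d_def]
    by (simp add: blinfun.add_right blinfun.scaleR_right)
  also have "\<dots> = P j + inner y (incl phi) *\<^sub>R incl phi"
    unfolding projP_def by (simp add: algebra_simps)
  also have "\<dots> = y" using P_DF_linearized_solution[of a y] P_decomposition[of y] unfolding j_def by simp
  finally show ?thesis .
qed

text \<open>Bordering: \<open>DF a\<close> is invertible modulo \<open>phi\<close>, so its invertibility is decided by the single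
  number \<open>\<langle>DF a (fiber_tangent a), phi\<rangle>\<close>.\<close>
lemma invertible_DF_iff: "invertible_op (DF a) \<longleftrightarrow> inner (DF a (fiber_tangent a)) (incl phi) \<noteq> 0"
proof
  assume "invertible_op (DF a)"
  then obtain S :: "'b \<Rightarrow>\<^sub>L 'a" where S: "\<And>b. S (DF a b) = b" unfolding invertible_op_def by blast
  show "inner (DF a (fiber_tangent a)) (incl phi) \<noteq> 0"
  proof
    assume "inner (DF a (fiber_tangent a)) (incl phi) = 0"
    then have "fiber_tangent a = 0" using S[of "fiber_tangent a"] DF_fiber_tangent[of a]
      by (simp add: blinfun.zero_right)
    then show False using inner_fiber_tangent[of a] by (simp add: linear_0[OF linear_incl])
  qed
next
  assume d: "inner (DF a (fiber_tangent a)) (incl phi) \<noteq> 0"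
  show "invertible_op (DF a)"
    by (rule invertible_opI[OF bounded_linear_bordered_inverse DF_bordered_inverse[OF d] DF_injective[OF d]])
qed

abbreviation "fiber_point \<equiv> fiber_u incl L N phi"

lemma has_derivative_height_fiber:
  assumes z: "z \<in> H\<^sub>Y"
  shows "((\<lambda>t. height incl L N phi (fiber_point z t)) has_real_derivative
           inner (DF (fiber_point z t0) (fiber_tangent (fiber_point z t0))) (incl phi)) (at t0)"
proof -
  have "((\<lambda>t. fiber_point z t) has_derivative (\<lambda>h. h *\<^sub>R fiber_tangent (fiber_point z t0))) (at t0)"
    using has_derivative_add[OF has_derivative_fiber[OF z] has_derivative_scaleR_left[OF has_derivative_ident]]
    unfolding fiber_u_def fiber_tangent_def by (simp add: algebra_simps)
  from has_derivative_compose[OF this has_derivative_F]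
  have "((\<lambda>t. F (fiber_point z t)) has_derivative
      (\<lambda>h. h *\<^sub>R DF (fiber_point z t0) (fiber_tangent (fiber_point z t0)))) (at t0)"
    by (simp add: blinfun.scaleR_right)
  from has_derivative_inner_left[OF this, of "incl phi"]
  show ?thesis unfolding height_def has_field_derivative_def
    by (rule has_derivative_eq_rhs) (simp add: fun_eq_iff)
qed

lemma critical_point_iff_height_critical:
  assumes "z \<in> H\<^sub>Y"
  shows "\<not> invertible_op (DF (fiber_point z t0)) \<longleftrightarrow>
         ((\<lambda>t. height incl L N phi (fiber_point z t)) has_real_derivative 0) (at t0)"
  using invertible_DF_iff DERIV_unique has_derivative_height_fiber[OF assms] by metis

end

lemma self_adjoint_graph_if_setting:
  assumes "graph_norm_setting incl L" "self_adjoint_op incl L"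
  shows "self_adjoint_graph incl L"
proof (rule self_adjoint_graph.intro)
  show "linear incl" "linear L" "\<And>a b. inner a b = inner (incl a) (incl b) + inner (L a) (L b)"
    using assms(1) unfolding graph_norm_setting_def by auto
  show "inner (L a) (incl b) = inner (incl a) (L b)" for a b
    using assms(2) unfolding self_adjoint_op_def by blast
qed

theorem mainTheorem5:
  fixes incl :: "'x::{real_inner,complete_space} \<Rightarrow> 'y::{real_inner,complete_space}"
    and L :: "'x \<Rightarrow> 'y" and N :: "'y \<Rightarrow> 'y"
    and lam :: real and phi :: "'x"
    and DF :: "'x \<Rightarrow> ('x \<Rightarrow>\<^sub>L 'y)"
    and z0 :: 'y and t0 :: real
  assumes setting: "graph_norm_setting incl L"
    and selfadj: "self_adjoint_op incl L"
    and eig: "simple_isolated_eigenvalue incl L lam phi"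
    and C1_deriv: "\<forall>a. (Fop incl L N has_derivative blinfun_apply (DF a)) (at a)"
    and C1_cont: "continuous_on UNIV DF"
    and H: "hypH incl L N lam phi"
    and z0: "z0 \<in> HY (incl phi)"
  shows "(\<not> invertible_op (DF (fiber_u incl L N phi z0 t0)) \<longleftrightarrow>
            ((\<lambda>t. height incl L N phi (fiber_u incl L N phi z0 t)) has_real_derivative 0) (at t0))
       \<and> (\<not> invertible_op (DF (fiber_u incl L N phi z0 t0)) \<longleftrightarrow>
            ((\<lambda>t. adapted_height incl L N phi z0 t) has_real_derivative 0) (at t0))"
proof -
  have graph: "self_adjoint_graph incl L" using setting selfadj by (rule self_adjoint_graph_if_setting)
  obtain e where "isolated_simple_eigenvalue incl L lam phi e"
    using eig unfolding simple_isolated_eigenvalue_def isolated_simple_eigenvalue_def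
      isolated_simple_eigenvalue_axioms_def using graph by blast
  moreover obtain n where n: "n \<ge> 0" "{-n..n} \<inter> op_spectrum incl L = {lam}"
    "\<And>t. n-lipschitz_on (HY (incl phi)) (\<lambda>w. projP (incl phi) (N (w + t *\<^sub>R incl phi)))"
    using H unfolding hypH_def by blast
  ultimately interpret spectral_gap incl L lam phi e n
    by (intro spectral_gap.intro spectral_gap_axioms.intro)
  obtain \<mu> R \<kappa> where "fiber_setting incl L lam phi e n N DF \<mu> R \<kappa>"
    using contractive_resolvent n(3) C1_deriv
    by (metis fiber_setting.intro fiber_setting_axioms.intro spectral_gap_axioms)
  then have "\<not> invertible_op (DF (fiber_u incl L N phi z0 t0)) \<longleftrightarrow>
      ((\<lambda>t. height incl L N phi (fiber_u incl L N phi z0 t)) has_real_derivative 0) (at t0)"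
    using z0 by (rule fiber_setting.critical_point_iff_height_critical)
  then show ?thesis unfolding adapted_height_def by simp
qed

end
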